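(* Consider the system $\dot x(t)=f(x_t,u(t))$ with delay-free output $y(t)=h_0(x(t))$ as in the context, and write, for $\xi\in\mathcal X^n$, $u\in\mathcal M$, $y(\tau)=h_0(x(\tau,\xi,u))$ for $\tau\ge-\theta$ (so $y(\tau)=h_0(\xi(\tau))$ for $\tau\in[-\theta,0]$), and $y_0\in\mathcal X^p$, $y_0(s)=h_0(\xi(s))$, so that $\|y_0\|_{\mathcal X}=H(\xi)$. 1. Suppose the system is GS and there exist $\beta\in\mathcal{KL}$, $\kappa,\gamma\in\mathcal N$ with $\kappa(s)<s$ for all $s>0$ such that for all $\xi\in\mathcal X^n$, $u\in\mathcal M$ and all $t\ge0$, $|y(t)|\le\max\{\beta(\|\xi\|_{\mathcal X},t),\ \kappa(\max_{\tau\in[-\theta,t]}|y(\tau)|),\ \gamma(\|u\|)\}$. Then the system is IOS. 2. Suppose the system is UBIBS and there exist $\beta\in\mathcal{KL}$, $\rho,\kappa,\gamma\in\mathcal N$ with $\kappa(s)<s$ for all $s>0$ such that for all $\xi,u$ and all $t\ge0$, $|y(t)|\le\max\{\beta(\|y_0\|_{\mathcal X},\ t/(1+\rho(\|\xi\|_{\mathcal X}))),\ \kappa(\max_{\tau\in[-\theta,t]}|y(\tau)|),\ \gamma(\|u\|)\}$. Then the system is OL-IOS in the history norm. 3. Suppose the system is forward complete and there exist $\beta\in\mathcal{KL}$, $\kappa,\gamma\in\mathcal N$ with $\kappa(s)<s$ for all $s>0$ such that for all $\xi,u$ and all $t\ge0$, $|y(t)|\le\max\{\beta(\|y_0\|_{\mathcal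 X},t),\ \kappa(\max_{\tau\in[-\theta,t]}|y(\tau)|),\ \gamma(\|u\|)\}$. Then the system is SI-IOS in the history norm.
   Context: Fix $\theta>0$. For $k\ge1$, $\mathcal X^k=C([-\theta,0],\mathbb R^k)$ with norm $\|\xi\|_{\mathcal X}=\max_{s\in[-\theta,0]}|\xi(s)|$. $\mathcal M$ is the set of measurable, locally essentially bounded $u:\mathbb R_{\ge0}\to\mathbb R^m$, $\|u\|$ its essential supremum on $[0,\infty)$. Classes: $\mathcal N$ = continuous nondecreasing $\sigma:\mathbb R_{\ge0}\to\mathbb R_{\ge0}$ with $\sigma(0)=0$; $\mathcal K$ = strictly increasing members of $\mathcal N$; $\mathcal K_\infty$ = members of $\mathcal K$ onto $\mathbb R_{\ge0}$; $\mathcal{KL}$ = $\beta(s,t)$ of class $\mathcal K$ in $s$ for each $t$ and decreasing to $0$ as $t\to\infty$ for each $s$. The system is $\dot x(t)=f(x_t,u(t))$, where $x_t(s)=x(t+s)$, $f:\mathcal X^n\times\mathbb R^m\to\mathbb R^n$ is locally Lipschitz and maps bounded sets to bounded sets; $x(\cdot,\xi,u)$ denotes the unique maximal solution with initial history $\xi\in\mathcal X^n$ and input $u\in\mathcal M$, $x_t^{\xi,u}$ its history segment. The output is $y(t)=h_0(x(t))$ with $h_0:\mathbb R^n\to\mathbb R^p$ continuous (i.e. output map $h(\xi)=h_0(\xi(0))$, with $|h(\xi)|\le\pi(\|\xi\|_{\mathcal X})$ for some $\pi\in\mathcal N$). Forward complete: all maximal solutions exist for all $t\ge0$. The output history map is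 $H(\xi)=\max_{s\in[-\theta,0]}|h_0(\xi(s))|$. UBIBS: there exist $\sigma\in\mathcal K_\infty$, $\mu\in\mathcal N$, $c>0$ with $|x(t,\xi,u)|\le\sigma(\|\xi\|_{\mathcal X})+\mu(\|u\|)+c$ for all $t\ge0,\xi,u$. GS: the same holds with $c=0$. IOS: forward complete and there are $\beta\in\mathcal{KL},\gamma\in\mathcal N$ with $|y(t,\xi,u)|\le\beta(\|\xi\|_{\mathcal X},t)+\gamma(\|u\|)$ for all $t\ge0,\xi,u$. OL-IOS in the history norm: IOS and there is $\sigma_1\in\mathcal K$ with $|y(t,\xi,u)|\le\max\{\sigma_1(H(\xi)),\sigma_1(\|u\|)\}$ for all $t\ge0,\xi,u$. SI-IOS in the history norm: forward complete and there are $\beta\in\mathcal{KL},\gamma\in\mathcal N$ with $|y(t,\xi,u)|\le\beta(H(\xi),t)+\gamma(\|u\|)$ for all $t\ge0,\xi,u$. *)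

theory Defs
  imports "HOL-Analysis.Analysis"
begin

definition classN :: "(real \<Rightarrow> real) \<Rightarrow> bool" where
  "classN \<sigma> \<longleftrightarrow> \<sigma> 0 = 0 \<and> continuous_on {0..} \<sigma> \<and> mono_on {0..} \<sigma> \<and> (\<forall>s\<ge>0. \<sigma> s \<ge> 0)"

definition classK :: "(real \<Rightarrow> real) \<Rightarrow> bool" where
  "classK \<sigma> \<longleftrightarrow> classN \<sigma> \<and> strict_mono_on {0..} \<sigma>"

definition classKinf :: "(real \<Rightarrow> real) \<Rightarrow> bool" where
  "classKinf \<sigma> \<longleftrightarrow> classK \<sigma> \<and> \<sigma> ` {0..} = {0..}"

definition classKL :: "(real \<Rightarrow> real \<Rightarrow> real) \<Rightarrow> bool" where
  "classKL \<beta> \<longleftrightarrow> (\<forall>t\<ge>0. classK (\<lambda>s. \<beta> s t)) \<and>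
     (\<forall>s\<ge>0. antimono_on {0..} (\<lambda>t. \<beta> s t) \<and> ((\<lambda>t. \<beta> s t) \<longlongrightarrow> 0) at_top)"

text \<open>A history is a function on the reals; only its values on [-theta,0] matter.
  The history space X is the set of functions continuous on [-theta,0].\<close>

definition Xspace :: "real \<Rightarrow> (real \<Rightarrow> 'a::real_normed_vector) set" where
  "Xspace \<theta> = {\<xi>. continuous_on {-\<theta>..0} \<xi>}"

definition hnorm :: "real \<Rightarrow> (real \<Rightarrow> 'a::real_normed_vector) \<Rightarrow> real" where
  "hnorm \<theta> \<xi> = Sup ((\<lambda>s. norm (\<xi> s)) ` {-\<theta>..0})"

definition Mspace :: "(real \<Rightarrow> 'a::euclidean_space) set" where
  "Mspace = {u. set_borel_measurable lborel {0..} u \<and>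
      (\<forall>T. \<exists>B. AE s in lborel. s \<in> {0..T} \<longrightarrow> norm (u s) \<le> B)}"

definition ess_bounded :: "(real \<Rightarrow> 'a::real_normed_vector) \<Rightarrow> bool" where
  "ess_bounded u \<longleftrightarrow> (\<exists>B. AE s in lborel. 0 \<le> s \<longrightarrow> norm (u s) \<le> B)"

text \<open>Essential supremum of the input on [0,\<infinity>) (meaningful when ess_bounded u).\<close>
definition unorm :: "(real \<Rightarrow> 'a::real_normed_vector) \<Rightarrow> real" where
  "unorm u = Inf {B. AE s in lborel. 0 \<le> s \<longrightarrow> norm (u s) \<le> B}"

definition is_sol ::
  "((real \<Rightarrow> 'n::euclidean_space) \<Rightarrow> 'm::euclidean_space \<Rightarrow> 'n) \<Rightarrow> real \<Rightarrow>
   (real \<Rightarrow> 'n) \<Rightarrow> (real \<Rightarrow> 'm) \<Rightarrow> real \<Rightarrow> (real \<Rightarrow> 'n) \<Rightarrow> bool" where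
  "is_sol f \<theta> \<xi> u T x \<longleftrightarrow>
     (\<forall>s\<in>{-\<theta>..0}. x s = \<xi> s) \<and> continuous_on {-\<theta>..T} x \<and>
     (\<forall>t\<in>{0..T}. ((\<lambda>s. f (\<lambda>r. x (s + r)) (u s)) has_integral (x t - x 0)) {0..t})"

definition forward_complete ::
  "((real \<Rightarrow> 'n::euclidean_space) \<Rightarrow> 'm::euclidean_space \<Rightarrow> 'n) \<Rightarrow> real \<Rightarrow> bool" where
  "forward_complete f \<theta> \<longleftrightarrow>
     (\<forall>\<xi>\<in>Xspace \<theta>. \<forall>u\<in>Mspace. \<exists>x. \<forall>T\<ge>0. is_sol f \<theta> \<xi> u T x)"

definition loc_lipschitz ::
  "((real \<Rightarrow> 'n::euclidean_space) \<Rightarrow> 'm::euclidean_space \<Rightarrow> 'n) \<Rightarrow> real \<Rightarrow> bool" where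
  "loc_lipschitz f \<theta> \<longleftrightarrow>
     (\<forall>\<xi>\<in>Xspace \<theta>. \<forall>v. \<exists>r>0. \<exists>L. \<forall>\<xi>1\<in>Xspace \<theta>. \<forall>\<xi>2\<in>Xspace \<theta>. \<forall>v1 v2.
        hnorm \<theta> (\<xi>1 - \<xi>) < r \<and> hnorm \<theta> (\<xi>2 - \<xi>) < r \<and> norm (v1 - v) < r \<and> norm (v2 - v) < r
        \<longrightarrow> norm (f \<xi>1 v1 - f \<xi>2 v2) \<le> L * (hnorm \<theta> (\<xi>1 - \<xi>2) + norm (v1 - v2)))"

definition bounded_on_bounded ::
  "((real \<Rightarrow> 'n::euclidean_space) \<Rightarrow> 'm::euclidean_space \<Rightarrow> 'n) \<Rightarrow> real \<Rightarrow> bool" where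
  "bounded_on_bounded f \<theta> \<longleftrightarrow>
     (\<forall>R. \<exists>B. \<forall>\<xi>\<in>Xspace \<theta>. \<forall>v. hnorm \<theta> \<xi> \<le> R \<and> norm v \<le> R \<longrightarrow> norm (f \<xi> v) \<le> B)"

text \<open>UBIBS / GS: the estimate is asserted for all t \<ge> 0, which presupposes that the
  solution exists for all t \<ge> 0 (forward completeness).\<close>

definition UBIBS ::
  "((real \<Rightarrow> 'n::euclidean_space) \<Rightarrow> 'm::euclidean_space \<Rightarrow> 'n) \<Rightarrow> real \<Rightarrow> bool" where
  "UBIBS f \<theta> \<longleftrightarrow> forward_complete f \<theta> \<and>
     (\<exists>\<sigma> \<mu> c. classKinf \<sigma> \<and> classN \<mu> \<and> c > 0 \<and>
       (\<forall>\<xi>\<in>Xspace \<theta>. \<forall>u\<in>Mspace. ess_bounded u \<longrightarrow> (\<forall>T\<ge>0. \<forall>x. is_sol f \<theta> \<xi> u T x \<longrightarrow>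
          norm (x T) \<le> \<sigma> (hnorm \<theta> \<xi>) + \<mu> (unorm u) + c)))"

definition GS ::
  "((real \<Rightarrow> 'n::euclidean_space) \<Rightarrow> 'm::euclidean_space \<Rightarrow> 'n) \<Rightarrow> real \<Rightarrow> bool" where
  "GS f \<theta> \<longleftrightarrow> forward_complete f \<theta> \<and>
     (\<exists>\<sigma> \<mu>. classKinf \<sigma> \<and> classN \<mu> \<and>
       (\<forall>\<xi>\<in>Xspace \<theta>. \<forall>u\<in>Mspace. ess_bounded u \<longrightarrow> (\<forall>T\<ge>0. \<forall>x. is_sol f \<theta> \<xi> u T x \<longrightarrow>
          norm (x T) \<le> \<sigma> (hnorm \<theta> \<xi>) + \<mu> (unorm u))))"

definition Hout :: "real \<Rightarrow> ('n \<Rightarrow> 'p::real_normed_vector) \<Rightarrow> (real \<Rightarrow> 'n) \<Rightarrow> real" where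
  "Hout \<theta> h0 \<xi> = hnorm \<theta> (\<lambda>s. h0 (\<xi> s))"

definition ymax :: "real \<Rightarrow> ('n \<Rightarrow> 'p::real_normed_vector) \<Rightarrow> (real \<Rightarrow> 'n) \<Rightarrow> real \<Rightarrow> real" where
  "ymax \<theta> h0 x t = Sup ((\<lambda>\<tau>. norm (h0 (x \<tau>))) ` {-\<theta>..t})"

definition IOS ::
  "((real \<Rightarrow> 'n::euclidean_space) \<Rightarrow> 'm::euclidean_space \<Rightarrow> 'n) \<Rightarrow> real \<Rightarrow>
   ('n \<Rightarrow> 'p::euclidean_space) \<Rightarrow> bool" where
  "IOS f \<theta> h0 \<longleftrightarrow> forward_complete f \<theta> \<and>
     (\<exists>\<beta> \<gamma>. classKL \<beta> \<and> classN \<gamma> \<and>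
       (\<forall>\<xi>\<in>Xspace \<theta>. \<forall>u\<in>Mspace. ess_bounded u \<longrightarrow> (\<forall>T\<ge>0. \<forall>x. is_sol f \<theta> \<xi> u T x \<longrightarrow>
          norm (h0 (x T)) \<le> \<beta> (hnorm \<theta> \<xi>) T + \<gamma> (unorm u))))"

definition OL_IOS_hist ::
  "((real \<Rightarrow> 'n::euclidean_space) \<Rightarrow> 'm::euclidean_space \<Rightarrow> 'n) \<Rightarrow> real \<Rightarrow>
   ('n \<Rightarrow> 'p::euclidean_space) \<Rightarrow> bool" where
  "OL_IOS_hist f \<theta> h0 \<longleftrightarrow> IOS f \<theta> h0 \<and>
     (\<exists>\<sigma>1. classK \<sigma>1 \<and>
       (\<forall>\<xi>\<in>Xspace \<theta>. \<forall>u\<in>Mspace. ess_bounded u \<longrightarrow> (\<forall>T\<ge>0. \<forall>x. is_sol f \<theta> \<xi> u T x \<longrightarrow>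
          norm (h0 (x T)) \<le> max (\<sigma>1 (Hout \<theta> h0 \<xi>)) (\<sigma>1 (unorm u)))))"

definition SI_IOS_hist ::
  "((real \<Rightarrow> 'n::euclidean_space) \<Rightarrow> 'm::euclidean_space \<Rightarrow> 'n) \<Rightarrow> real \<Rightarrow>
   ('n \<Rightarrow> 'p::euclidean_space) \<Rightarrow> bool" where
  "SI_IOS_hist f \<theta> h0 \<longleftrightarrow> forward_complete f \<theta> \<and>
     (\<exists>\<beta> \<gamma>. classKL \<beta> \<and> classN \<gamma> \<and>
       (\<forall>\<xi>\<in>Xspace \<theta>. \<forall>u\<in>Mspace. ess_bounded u \<longrightarrow> (\<forall>T\<ge>0. \<forall>x. is_sol f \<theta> \<xi> u T x \<longrightarrow>
          norm (h0 (x T)) \<le> \<beta> (Hout \<theta> h0 \<xi>) T + \<gamma> (unorm u))))"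

end

theory Submission
  imports Defs
begin

text \<open>
  Since \<open>\<kappa>(s) < s\<close>, the small-gain hypothesis on \<open>[0, T]\<close> bounds the whole output record
  on \<open>[-\<theta>, T]\<close> by the larger of the initial output, the transient term at time 0 and
  \<open>\<gamma>(|u|)\<close>. A solution restarted at time \<open>a\<close> is again a solution, with history
  \<open>x\<^sub>a\<close> and an input of no larger norm, so the hypothesis also holds along restarted trajectories.
  If the transient term of restarted trajectories drops below \<open>\<epsilon>\<close> after a time \<open>\<tau>\<close> that is
  uniform over bounded data, each window of length \<open>\<tau> + \<theta>\<close> lowers the bound on the output tail
  by a fixed \<open>\<delta>\<close> as long as it exceeds \<open>max \<epsilon> (\<gamma>(|u|))\<close>, so the output reaches that level
  after a uniform time. Uniform boundedness and this uniform asymptotic gain give a KL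
  estimate. The three parts differ only in how the transient term of restarted trajectories is
  kept bounded: by the state bound (GS), by the output bound, or by both together with the
  time rescaling by \<open>1 + \<rho>(\<parallel>\<xi>\<parallel>)\<close> (UBIBS).
\<close>

definition sup_norm :: "(real \<Rightarrow> 'a::real_normed_vector) \<Rightarrow> real \<Rightarrow> real \<Rightarrow> real" where
  "sup_norm F p q = Sup ((\<lambda>s. norm (F s)) ` {p..q})"

lemma hnorm_eq_sup_norm: "hnorm \<theta> \<xi> = sup_norm \<xi> (-\<theta>) 0"
  by (simp add: hnorm_def sup_norm_def)

lemma Hout_eq_sup_norm: "Hout \<theta> h0 \<xi> = sup_norm (\<lambda>s. h0 (\<xi> s)) (-\<theta>) 0"
  by (simp add: Hout_def hnorm_eq_sup_norm)

lemma ymax_eq_sup_norm: "ymax \<theta> h0 x t = sup_norm (\<lambda>s. h0 (x s)) (-\<theta>) t"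
  by (simp add: ymax_def sup_norm_def)

lemma sup_norm_shift: "sup_norm (\<lambda>s. F (s + a)) p q = sup_norm F (p + a) (q + a)"
proof -
  have "(\<lambda>s. norm (F (s + a))) ` {p..q} = (\<lambda>s. norm (F s)) ` (\<lambda>s. s + a) ` {p..q}"
    by (simp only: image_image)
  also have "(\<lambda>s. s + a) ` {p..q} = {p + a..q + a}"
    by (rule image_add_atLeastAtMost')
  finally show ?thesis by (simp only: sup_norm_def)
qed

lemma norm_le_sup_norm:
  assumes "continuous_on {p..q} F" "s \<in> {p..q}"
  shows "norm (F s) \<le> sup_norm F p q"
proof -
  have "compact ((\<lambda>s. norm (F s)) ` {p..q})"
    by (intro compact_continuous_image continuous_on_norm assms(1) compact_Icc)
  then have "bdd_above ((\<lambda>s. norm (F s)) ` {p..q})"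
    by (rule bounded_imp_bdd_above[OF compact_imp_bounded])
  then show ?thesis
    unfolding sup_norm_def by (rule cSup_upper[OF imageI[OF assms(2)]])
qed

lemma sup_norm_nonneg:
  assumes "continuous_on {p..q} F" "p \<le> q"
  shows "0 \<le> sup_norm F p q"
  using norm_le_sup_norm[OF assms(1), of q] assms(2) norm_ge_zero[of "F q"]
  by (meson atLeastAtMost_iff order_refl order_trans)

lemma sup_norm_le:
  assumes "p \<le> q" "\<And>s. s \<in> {p..q} \<Longrightarrow> norm (F s) \<le> B"
  shows "sup_norm F p q \<le> B"
  unfolding sup_norm_def using assms by (intro cSup_least) auto

lemma sup_norm_mono:
  assumes "continuous_on {p'..q'} F" "p' \<le> p" "p \<le> q" "q \<le> q'"
  shows "sup_norm F p q \<le> sup_norm F p' q'"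
  by (rule sup_norm_le) (use assms in \<open>auto intro!: norm_le_sup_norm\<close>)

lemma hnorm_nonneg:
  assumes "\<xi> \<in> Xspace \<theta>" "0 \<le> \<theta>"
  shows "0 \<le> hnorm \<theta> \<xi>"
  using assms by (simp add: hnorm_eq_sup_norm Xspace_def sup_norm_nonneg)

lemma norm_le_hnorm:
  assumes "\<xi> \<in> Xspace \<theta>" "s \<in> {-\<theta>..0}"
  shows "norm (\<xi> s) \<le> hnorm \<theta> \<xi>"
  using assms by (simp add: hnorm_eq_sup_norm Xspace_def norm_le_sup_norm)

lemma Xspace_output_continuous:
  assumes "\<xi> \<in> Xspace \<theta>" "continuous_on UNIV h0"
  shows "continuous_on {-\<theta>..0} (\<lambda>s. h0 (\<xi> s))"
  using assms(1) unfolding Xspace_def by (intro continuous_on_compose2[OF assms(2)]) auto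

lemma Hout_nonneg:
  assumes "\<xi> \<in> Xspace \<theta>" "continuous_on UNIV h0" "0 \<le> \<theta>"
  shows "0 \<le> Hout \<theta> h0 \<xi>"
  using Xspace_output_continuous[OF assms(1,2)] assms(3)
  by (simp add: Hout_eq_sup_norm sup_norm_nonneg)

lemma norm_output_le_Hout:
  assumes "\<xi> \<in> Xspace \<theta>" "continuous_on UNIV h0" "s \<in> {-\<theta>..0}"
  shows "norm (h0 (\<xi> s)) \<le> Hout \<theta> h0 \<xi>"
  unfolding Hout_eq_sup_norm
  by (rule norm_le_sup_norm[OF Xspace_output_continuous[OF assms(1,2)] assms(3)])

lemma classN_mono: "classN \<kappa> \<Longrightarrow> 0 \<le> a \<Longrightarrow> a \<le> b \<Longrightarrow> \<kappa> a \<le> \<kappa> b"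
  unfolding classN_def by (auto intro: mono_onD)

lemma classN_nonneg: "classN \<kappa> \<Longrightarrow> 0 \<le> s \<Longrightarrow> 0 \<le> \<kappa> s"
  unfolding classN_def by auto

lemma classN_add: "classN a \<Longrightarrow> classN b \<Longrightarrow> classN (\<lambda>s. a s + b s)"
  unfolding classN_def by (auto intro!: continuous_intros add_mono simp: mono_on_def)

lemma classK_add: "classK a \<Longrightarrow> classN b \<Longrightarrow> classK (\<lambda>s. a s + b s)"
  unfolding classK_def using classN_add[of a b]
  by (auto simp: strict_mono_on_def classN_def mono_on_def intro: add_less_le_mono)

lemma classK_id: "classK (\<lambda>s. s)"
  unfolding classK_def classN_def
  by (auto simp: strict_mono_on_def mono_on_def intro: continuous_intros)

lemma classN_comp: "classN a \<Longrightarrow> classN b \<Longrightarrow> classN (\<lambda>s. a (b s))"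
  unfolding classN_def
  by (auto intro!: continuous_on_compose2[of "{0..}" a "{0..}" b] simp: mono_on_def)

lemma classN_zero: "classN (\<lambda>_. 0)"
  by (simp add: classN_def mono_on_def)

lemma classN_less_id_le: "classN \<kappa> \<Longrightarrow> \<forall>s>0. \<kappa> s < s \<Longrightarrow> 0 \<le> s \<Longrightarrow> \<kappa> s \<le> s"
  unfolding classN_def by (cases "s = 0") (auto simp: less_imp_le)

lemma classN_max: "classN \<kappa> \<Longrightarrow> 0 \<le> a \<Longrightarrow> 0 \<le> b \<Longrightarrow> \<kappa> (max a b) = max (\<kappa> a) (\<kappa> b)"
  using classN_mono[of \<kappa> a b] classN_mono[of \<kappa> b a] by (auto simp: max_def)

lemma classN_less_id_gap:
  assumes \<kappa>: "classN \<kappa>" and \<kappa>_less: "\<forall>s>0. \<kappa> s < s" and \<epsilon>: "0 < \<epsilon>"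
  obtains \<delta> where "0 < \<delta>" "\<And>s. \<epsilon> < s \<Longrightarrow> s \<le> C \<Longrightarrow> \<kappa> s \<le> s - \<delta>"
proof (cases "C \<le> \<epsilon>")
  case True
  then show ?thesis by (intro that[of 1]) auto
next
  case False
  have "continuous_on {\<epsilon>..C} (\<lambda>s. s - \<kappa> s)"
    using \<kappa> \<epsilon> unfolding classN_def by (intro continuous_intros) (auto intro: continuous_on_subset)
  from continuous_attains_inf[OF compact_Icc _ this] False
  obtain s0 where s0: "s0 \<in> {\<epsilon>..C}" "\<And>s. s \<in> {\<epsilon>..C} \<Longrightarrow> s0 - \<kappa> s0 \<le> s - \<kappa> s" by auto
  have "\<kappa> s0 < s0" using \<kappa>_less s0(1) \<epsilon> by auto
  show ?thesis
  proof (rule that[of "s0 - \<kappa> s0"])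
    fix s assume "\<epsilon> < s" "s \<le> C"
    then have "s0 - \<kappa> s0 \<le> s - \<kappa> s" by (intro s0(2)) auto
    then show "\<kappa> s \<le> s - (s0 - \<kappa> s0)" by linarith
  qed (use \<open>\<kappa> s0 < s0\<close> in simp)
qed

lemma classKL_classK: "classKL \<beta> \<Longrightarrow> 0 \<le> t \<Longrightarrow> classK (\<lambda>s. \<beta> s t)"
  unfolding classKL_def by auto

lemma classKL_classN: "classKL \<beta> \<Longrightarrow> 0 \<le> t \<Longrightarrow> classN (\<lambda>s. \<beta> s t)"
  using classKL_classK classK_def by blast

lemma classKL_mono: "classKL \<beta> \<Longrightarrow> 0 \<le> t \<Longrightarrow> 0 \<le> a \<Longrightarrow> a \<le> b \<Longrightarrow> \<beta> a t \<le> \<beta> b t"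
  using classKL_classK classN_mono classK_def by metis

lemma classKL_antimono: "classKL \<beta> \<Longrightarrow> 0 \<le> s \<Longrightarrow> 0 \<le> t \<Longrightarrow> t \<le> t' \<Longrightarrow> \<beta> s t' \<le> \<beta> s t"
  unfolding classKL_def by (auto simp: monotone_on_def)

lemma classKL_nonneg: "classKL \<beta> \<Longrightarrow> 0 \<le> s \<Longrightarrow> 0 \<le> t \<Longrightarrow> 0 \<le> \<beta> s t"
  unfolding classKL_def classK_def classN_def by auto

lemma classKL_eventually_le:
  assumes "classKL \<beta>" "0 \<le> s" "0 < \<epsilon>"
  obtains \<tau> where "0 \<le> \<tau>" "\<beta> s \<tau> \<le> \<epsilon>"
proof -
  have "((\<lambda>t. \<beta> s t) \<longlongrightarrow> 0) at_top" using assms unfolding classKL_def by auto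
  then have "eventually (\<lambda>t. \<beta> s t < \<epsilon>) at_top" using assms(3) by (rule order_tendstoD)
  then obtain T where "\<And>t. T \<le> t \<Longrightarrow> \<beta> s t < \<epsilon>" by (auto simp: eventually_at_top_linorder)
  then show ?thesis by (intro that[of "max T 0"]) (auto intro: less_imp_le)
qed

lemma Hout_le_classN:
  assumes "\<xi> \<in> Xspace \<theta>" "0 \<le> \<theta>" "classN \<pi>" "\<forall>v. norm (h0 v) \<le> \<pi> (norm v)"
  shows "Hout \<theta> h0 \<xi> \<le> \<pi> (hnorm \<theta> \<xi>)"
  unfolding Hout_eq_sup_norm
proof (rule sup_norm_le)
  fix s assume "s \<in> {-\<theta>..0}"
  then have "\<pi> (norm (\<xi> s)) \<le> \<pi> (hnorm \<theta> \<xi>)"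
    using assms by (auto intro!: classN_mono[OF assms(3)] norm_le_hnorm)
  then show "norm (h0 (\<xi> s)) \<le> \<pi> (hnorm \<theta> \<xi>)"
    using assms(4) order_trans by blast
qed (use assms in auto)

section \<open>Solutions, restarts and inputs\<close>

lemma is_sol_restrict:
  assumes "is_sol f \<theta> \<xi> u T x" "0 \<le> T'" "T' \<le> T"
  shows "is_sol f \<theta> \<xi> u T' x"
  using assms unfolding is_sol_def by (auto intro: continuous_on_subset)

lemma is_sol_continuous_on:
  "is_sol f \<theta> \<xi> u T x \<Longrightarrow> continuous_on {-\<theta>..T} x"
  by (simp add: is_sol_def)

lemma is_sol_output_continuous_on:
  assumes "is_sol f \<theta> \<xi> u T x" "continuous_on UNIV h0"
  shows "continuous_on {-\<theta>..T} (\<lambda>s. h0 (x s))"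
  by (intro continuous_on_compose2[OF assms(2) is_sol_continuous_on[OF assms(1)]]) auto

lemma is_sol_shift:
  assumes sol: "is_sol f \<theta> \<xi> u T x" and a: "0 \<le> a" "a \<le> T"
  shows "is_sol f \<theta> (\<lambda>s. x (s + a)) (\<lambda>s. u (s + a)) (T - a) (\<lambda>s. x (s + a))"
  unfolding is_sol_def
proof (intro conjI ballI)
  show "continuous_on {-\<theta>..T - a} (\<lambda>s. x (s + a))"
    by (rule continuous_on_compose2[OF is_sol_continuous_on[OF sol]])
       (use a in \<open>auto intro!: continuous_intros\<close>)
  fix t assume t: "t \<in> {0..T - a}"
  define g where "g = (\<lambda>s. f (\<lambda>r. x (s + r)) (u s))"
  have long: "(g has_integral (x (t + a) - x 0)) {0..t + a}"
    and short: "(g has_integral (x a - x 0)) {0..a}"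
    using sol t a unfolding is_sol_def g_def by auto
  have "g integrable_on {a..t + a}"
    by (rule integrable_subinterval_real[OF has_integral_integrable[OF long]]) (use t a in auto)
  then obtain J where J: "(g has_integral J) {a..t + a}" by blast
  from has_integral_combine[OF _ _ short J] t a
  have "(g has_integral (x a - x 0 + J)) {0..t + a}" by auto
  with long have "J = x (t + a) - x a" by (auto dest: has_integral_unique simp: algebra_simps)
  with J have "((\<lambda>s. g (s + a)) has_integral (x (t + a) - x a)) {0..t}"
    using has_integral_shift_real_ivl[of g _ a "t + a" a] by simp
  then show "((\<lambda>s. f (\<lambda>r. x (s + r + a)) (u (s + a))) has_integral (x (t + a) - x (0 + a))) {0..t}"
    by (simp add: g_def algebra_simps)
qed auto

lemma shift_in_Xspace:
  assumes "is_sol f \<theta> \<xi> u T x" "0 \<le> a" "a \<le> T"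
  shows "(\<lambda>s. x (s + a)) \<in> Xspace \<theta>"
  using is_sol_continuous_on[OF is_sol_shift[OF assms]] assms(2,3)
  unfolding Xspace_def by (auto intro: continuous_on_subset)

lemma AE_lborel_shift:
  assumes "AE s in lborel. P s"
  shows "AE s in lborel. P (s + (c::real))"
proof -
  have "AE s in distr lborel borel ((+) c). P s"
    unfolding lborel_distr_plus by (rule assms)
  from AE_distrD[OF _ this] show ?thesis by (simp add: add.commute)
qed

lemma AE_bound_nonneg:
  assumes "AE s in lborel. 0 \<le> (s::real) \<longrightarrow> norm (v s) \<le> (B::real)"
  shows "0 \<le> B"
proof (rule ccontr)
  assume "\<not> 0 \<le> B"
  then have "AE s in lborel. (s::real) \<notin> {0..}"
    using assms by (rule_tac eventually_mono) (auto dest: order_trans[OF norm_ge_zero])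
  then have "emeasure lborel {0::real..} = 0"
    by (subst (asm) AE_iff_measurable[of "{0..}"]) auto
  moreover have "emeasure lborel {0::real..1} \<le> emeasure lborel {0::real..}"
    by (rule emeasure_mono) auto
  ultimately show False by simp
qed

lemma unorm_nonneg: "ess_bounded u \<Longrightarrow> 0 \<le> unorm u"
  unfolding ess_bounded_def unorm_def
  by (intro cInf_greatest) (auto intro: AE_bound_nonneg)

lemma Mspace_shift:
  assumes "u \<in> Mspace" "0 \<le> (a::real)"
  shows "(\<lambda>s. u (s + a)) \<in> Mspace"
proof -
  have "(\<lambda>s. indicator {0..} s *\<^sub>R u s) \<in> borel_measurable lborel"
    using assms by (simp add: Mspace_def set_borel_measurable_def)
  then have shifted: "(\<lambda>s. indicator {0..} (s + a) *\<^sub>R u (s + a)) \<in> borel_measurable lborel"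
    by (rule measurable_compose[rotated]) simp
  have "(\<lambda>s. indicator {0..} s *\<^sub>R u (s + a)) =
       (\<lambda>s. indicator {0::real..} s *\<^sub>R (indicator {0..} (s + a) *\<^sub>R u (s + a)))"
    using assms(2) by (auto simp: indicator_def)
  then have "(\<lambda>s. indicator {0..} s *\<^sub>R u (s + a)) \<in> borel_measurable lborel"
    by (simp only:) (intro borel_measurable_scaleR shifted borel_measurable_indicator; simp)
  moreover have "\<exists>B. AE s in lborel. s \<in> {0..T} \<longrightarrow> norm (u (s + a)) \<le> B" for T
  proof -
    obtain B where "AE s in lborel. s \<in> {0..T + a} \<longrightarrow> norm (u s) \<le> B"
      using assms by (auto simp: Mspace_def)
    from AE_lborel_shift[OF this, of a] show ?thesis
      by (auto elim!: eventually_mono simp: assms(2))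
  qed
  ultimately show ?thesis by (simp add: Mspace_def set_borel_measurable_def)
qed

lemma ess_bound_shift:
  assumes "AE s in lborel. 0 \<le> s \<longrightarrow> norm (u s) \<le> B" "0 \<le> (a::real)"
  shows "AE s in lborel. 0 \<le> s \<longrightarrow> norm (u (s + a)) \<le> B"
  using AE_lborel_shift[OF assms(1), of a] by (auto elim!: eventually_mono simp: assms(2))

lemma ess_bounded_shift: "ess_bounded u \<Longrightarrow> 0 \<le> a \<Longrightarrow> ess_bounded (\<lambda>s. u (s + a))"
  unfolding ess_bounded_def using ess_bound_shift by blast

lemma unorm_shift_le:
  assumes "ess_bounded u" "0 \<le> a"
  shows "unorm (\<lambda>s. u (s + a)) \<le> unorm u"
  unfolding unorm_def
proof (rule cInf_superset_mono)
  show "{B. AE s in lborel. 0 \<le> s \<longrightarrow> norm (u s) \<le> B} \<noteq> {}"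
    using assms(1) by (auto simp: ess_bounded_def)
  show "bdd_below {B. AE s in lborel. 0 \<le> s \<longrightarrow> norm (u (s + a)) \<le> B}"
    by (rule bdd_belowI[of _ 0]) (auto intro: AE_bound_nonneg)
  show "{B. AE s in lborel. 0 \<le> s \<longrightarrow> norm (u s) \<le> B}
      \<subseteq> {B. AE s in lborel. 0 \<le> s \<longrightarrow> norm (u (s + a)) \<le> B}"
    using ess_bound_shift[OF _ assms(2)] by blast
qed

lemma hnorm_restart_le:
  assumes \<theta>: "0 \<le> \<theta>" and \<xi>: "\<xi> \<in> Xspace \<theta>" and sol: "is_sol f \<theta> \<xi> u T x"
    and a: "0 \<le> a" "a \<le> T"
    and state: "\<And>s. s \<in> {0..T} \<Longrightarrow> norm (x s) \<le> M" and hist: "hnorm \<theta> \<xi> \<le> M"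
  shows "hnorm \<theta> (\<lambda>s. x (s + a)) \<le> M"
  unfolding hnorm_eq_sup_norm
proof (rule sup_norm_le)
  fix s assume s: "s \<in> {-\<theta>..0}"
  show "norm (x (s + a)) \<le> M"
  proof (cases "s + a \<le> 0")
    case True
    then have "x (s + a) = \<xi> (s + a)" "s + a \<in> {-\<theta>..0}"
      using sol s a by (auto simp: is_sol_def)
    then show ?thesis using norm_le_hnorm[OF \<xi>] hist by fastforce
  next
    case False
    then show ?thesis using state s a by auto
  qed
qed (use \<theta> in auto)

lemma hnorm_restart_bounded:
  fixes f :: "(real \<Rightarrow> 'n::euclidean_space) \<Rightarrow> 'm::euclidean_space \<Rightarrow> 'n"
  assumes \<theta>: "0 \<le> \<theta>" and \<sigma>: "classN \<sigma>" and \<mu>: "classN \<mu>" and c: "0 \<le> c"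
    and state_bound: "\<forall>\<xi>\<in>Xspace \<theta>. \<forall>u\<in>Mspace. ess_bounded u \<longrightarrow> (\<forall>T\<ge>0. \<forall>x. is_sol f \<theta> \<xi> u T x \<longrightarrow>
       norm (x T) \<le> \<sigma> (hnorm \<theta> \<xi>) + \<mu> (unorm u) + c)"
    and \<xi>: "\<xi> \<in> Xspace \<theta>" and u: "u \<in> Mspace" "ess_bounded u" and sol: "is_sol f \<theta> \<xi> u T x"
    and small: "hnorm \<theta> \<xi> \<le> r" "unorm u \<le> r" and a: "0 \<le> a" "a \<le> T"
  shows "hnorm \<theta> (\<lambda>s. x (s + a)) \<le> r + \<sigma> r + \<mu> r + c"
proof (rule hnorm_restart_le[OF \<theta> \<xi> sol a])
  have h: "0 \<le> hnorm \<theta> \<xi>" by (rule hnorm_nonneg[OF \<xi> \<theta>])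
  have mono: "\<sigma> (hnorm \<theta> \<xi>) \<le> \<sigma> r" "\<mu> (unorm u) \<le> \<mu> r"
    using small h unorm_nonneg[OF u(2)] by (auto intro: classN_mono[OF \<sigma>] classN_mono[OF \<mu>])
  have nonneg: "0 \<le> \<sigma> r" "0 \<le> \<mu> r"
    using h small by (auto intro: classN_nonneg[OF \<sigma>] classN_nonneg[OF \<mu>])
  show "norm (x s) \<le> r + \<sigma> r + \<mu> r + c" if "s \<in> {0..T}" for s
  proof -
    have "norm (x s) \<le> \<sigma> (hnorm \<theta> \<xi>) + \<mu> (unorm u) + c"
      using state_bound \<xi> u is_sol_restrict[OF sol, of s] that by auto
    then show ?thesis using mono small h by linarith
  qed
  show "hnorm \<theta> \<xi> \<le> r + \<sigma> r + \<mu> r + c" using nonneg small c by linarith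
qed

section \<open>A continuous KL majorant\<close>

definition ramp :: "real \<Rightarrow> real" where
  "ramp x = min 1 (max 0 x)"

definition ramp_sum :: "(real \<Rightarrow> real \<Rightarrow> real) \<Rightarrow> nat \<Rightarrow> real \<Rightarrow> real \<Rightarrow> real" where
  "ramp_sum w K r t = (\<Sum>n<K. w (real n + 1) t * ramp (r + 1 - real n))"

text \<open>On \<open>[m, m + 1]\<close> the sum contains the full term \<open>w (m + 1) t\<close>, hence dominates \<open>w r t\<close>;
  as a finite sum of ramps it is continuous in \<open>r\<close>.\<close>

definition ramp_majorant :: "(real \<Rightarrow> real \<Rightarrow> real) \<Rightarrow> real \<Rightarrow> real \<Rightarrow> real" where
  "ramp_majorant w r t = ramp_sum w (nat \<lceil>r\<rceil> + 2) r t"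

lemma ramp_majorant_eq_ramp_sum:
  assumes "nat \<lceil>r\<rceil> + 2 \<le> K"
  shows "ramp_majorant w r t = ramp_sum w K r t"
  unfolding ramp_majorant_def ramp_sum_def
proof (rule sum.mono_neutral_left)
  show "\<forall>n\<in>{..<K} - {..<nat \<lceil>r\<rceil> + 2}. w (real n + 1) t * ramp (r + 1 - real n) = 0"
    by (auto simp: ramp_def) linarith
qed (use assms in auto)

lemma isCont_ramp_majorant: "isCont (\<lambda>r. ramp_majorant w r t) r0"
proof -
  define K where "K = nat \<lceil>r0\<rceil> + 3"
  have "eventually (\<lambda>r. r < r0 + 1) (nhds r0)"
    by (rule eventually_nhds_in_open[of "{..<r0 + 1}", simplified]) auto
  then have "eventually (\<lambda>r. ramp_majorant w r t = ramp_sum w K r t) (nhds r0)"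
    by (rule eventually_mono) (auto intro!: ramp_majorant_eq_ramp_sum simp: K_def; linarith)
  moreover have "isCont (\<lambda>r. ramp_sum w K r t) r0"
    unfolding ramp_sum_def ramp_def by (intro continuous_intros)
  ultimately show ?thesis by (simp add: isCont_cong)
qed

lemma ramp_majorant_nonneg:
  assumes "\<And>r t. 0 \<le> r \<Longrightarrow> 0 \<le> t \<Longrightarrow> 0 \<le> w r t" "0 \<le> t"
  shows "0 \<le> ramp_majorant w r t"
  unfolding ramp_majorant_def ramp_sum_def
  by (intro sum_nonneg mult_nonneg_nonneg assms) (auto simp: ramp_def)

lemma ramp_majorant_ge:
  assumes nonneg: "\<And>r t. 0 \<le> r \<Longrightarrow> 0 \<le> t \<Longrightarrow> 0 \<le> w r t"
    and mono: "\<And>r r' t. 0 \<le> r \<Longrightarrow> r \<le> r' \<Longrightarrow> 0 \<le> t \<Longrightarrow> w r t \<le> w r' t"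
    and "0 \<le> r" "0 \<le> t"
  shows "w r t \<le> ramp_majorant w r t"
proof -
  define m where "m = nat \<lfloor>r\<rfloor>"
  have m: "real m \<le> r" "r \<le> real m + 1" "m < nat \<lceil>r\<rceil> + 2"
    unfolding m_def using assms(3) by linarith+
  have "w r t \<le> w (real m + 1) t" using m assms(3,4) by (intro mono) auto
  also have "\<dots> = w (real m + 1) t * ramp (r + 1 - real m)"
    using m by (simp add: ramp_def)
  also have "\<dots> \<le> ramp_majorant w r t"
    unfolding ramp_majorant_def ramp_sum_def
    by (rule member_le_sum) (use m assms(4) in \<open>auto intro!: mult_nonneg_nonneg nonneg simp: ramp_def\<close>)
  finally show ?thesis .
qed

lemma ramp_majorant_mono:
  assumes "\<And>r t. 0 \<le> r \<Longrightarrow> 0 \<le> t \<Longrightarrow> 0 \<le> w r t" "r1 \<le> r2" "0 \<le> t"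
  shows "ramp_majorant w r1 t \<le> ramp_majorant w r2 t"
proof -
  define K where "K = nat \<lceil>r2\<rceil> + 2"
  have "nat \<lceil>r1\<rceil> \<le> nat \<lceil>r2\<rceil>" using assms(2) by (intro nat_mono ceiling_mono)
  then have "ramp_majorant w r1 t = ramp_sum w K r1 t" "ramp_majorant w r2 t = ramp_sum w K r2 t"
    unfolding K_def by (auto intro: ramp_majorant_eq_ramp_sum)
  moreover have "ramp_sum w K r1 t \<le> ramp_sum w K r2 t"
    unfolding ramp_sum_def using assms
    by (intro sum_mono mult_left_mono) (auto simp: ramp_def)
  ultimately show ?thesis by simp
qed

lemma ramp_majorant_antimono:
  assumes "\<And>r t t'. 0 \<le> r \<Longrightarrow> 0 \<le> t \<Longrightarrow> t \<le> t' \<Longrightarrow> w r t' \<le> w r t" "0 \<le> t1" "t1 \<le> t2"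
  shows "ramp_majorant w r t2 \<le> ramp_majorant w r t1"
  unfolding ramp_majorant_def ramp_sum_def
  by (intro sum_mono mult_right_mono assms) (auto simp: ramp_def)

lemma ramp_majorant_tendsto:
  assumes "\<And>r. 0 \<le> r \<Longrightarrow> ((\<lambda>t. w r t) \<longlongrightarrow> 0) at_top"
  shows "((\<lambda>t. ramp_majorant w r t) \<longlongrightarrow> 0) at_top"
  unfolding ramp_majorant_def ramp_sum_def
  by (intro tendsto_null_sum tendsto_mult_left_zero assms) auto

text \<open>The summands \<open>r\<close> and \<open>r / (1 + t)\<close> make the majorant strictly increasing in \<open>r\<close>
  without spoiling its decay in \<open>t\<close>.\<close>

definition KL_majorant :: "(real \<Rightarrow> real) \<Rightarrow> (real \<Rightarrow> real \<Rightarrow> real) \<Rightarrow> real \<Rightarrow> real \<Rightarrow> real" where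
  "KL_majorant \<sigma> w r t = min (\<sigma> r + r) (ramp_majorant w r t + r / (1 + t))"

context
  fixes \<sigma> :: "real \<Rightarrow> real" and w :: "real \<Rightarrow> real \<Rightarrow> real"
  assumes \<sigma>: "classN \<sigma>"
    and nonneg: "\<And>r t. 0 \<le> r \<Longrightarrow> 0 \<le> t \<Longrightarrow> 0 \<le> w r t"
    and bound: "\<And>r t. 0 \<le> r \<Longrightarrow> 0 \<le> t \<Longrightarrow> w r t \<le> \<sigma> r"
    and mono: "\<And>r r' t. 0 \<le> r \<Longrightarrow> r \<le> r' \<Longrightarrow> 0 \<le> t \<Longrightarrow> w r t \<le> w r' t"
    and antimono: "\<And>r t t'. 0 \<le> r \<Longrightarrow> 0 \<le> t \<Longrightarrow> t \<le> t' \<Longrightarrow> w r t' \<le> w r t"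
    and tendsto: "\<And>r. 0 \<le> r \<Longrightarrow> ((\<lambda>t. w r t) \<longlongrightarrow> 0) at_top"
begin

lemma KL_majorant_ge:
  assumes "0 \<le> r" "0 \<le> t"
  shows "w r t \<le> KL_majorant \<sigma> w r t"
proof -
  have "w r t \<le> ramp_majorant w r t" by (rule ramp_majorant_ge[where w = w, OF nonneg mono assms])
  moreover have "0 \<le> r / (1 + t)" using assms by simp
  ultimately show ?thesis
    unfolding KL_majorant_def min.bounded_iff using bound[OF assms] assms by linarith
qed

lemma classK_KL_majorant:
  assumes t: "0 \<le> t"
  shows "classK (\<lambda>r. KL_majorant \<sigma> w r t)"
proof -
  have \<sigma>_props: "\<sigma> 0 = 0" "continuous_on {0..} \<sigma>" "\<And>s. 0 \<le> s \<Longrightarrow> 0 \<le> \<sigma> s"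
    using \<sigma> by (auto simp: classN_def)
  have "strict_mono_on {0..} (\<lambda>r. KL_majorant \<sigma> w r t)"
  proof (rule strict_mono_onI)
    fix r s :: real assume rs: "r \<in> {0..}" "s \<in> {0..}" "r < s"
    then have "\<sigma> r \<le> \<sigma> s" by (intro classN_mono[OF \<sigma>]) auto
    moreover have "ramp_majorant w r t \<le> ramp_majorant w s t"
      using rs t by (intro ramp_majorant_mono[OF nonneg]) auto
    moreover have "r / (1 + t) < s / (1 + t)" using rs t by (simp add: divide_strict_right_mono)
    ultimately show "KL_majorant \<sigma> w r t < KL_majorant \<sigma> w s t"
      unfolding KL_majorant_def using rs(3) by linarith
  qed
  moreover have "continuous_on {0..} (\<lambda>r. ramp_majorant w r t)"
    by (intro continuous_at_imp_continuous_on ballI isCont_ramp_majorant)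
  then have "continuous_on {0..} (\<lambda>r. KL_majorant \<sigma> w r t)"
    unfolding KL_majorant_def using t
    by (intro continuous_on_min continuous_on_add continuous_on_divide \<sigma>_props(2)
        continuous_on_id continuous_on_const) auto
  moreover have "0 \<le> ramp_majorant w r t" for r
    by (rule ramp_majorant_nonneg[OF nonneg t])
  then have "0 \<le> KL_majorant \<sigma> w r t" if "0 \<le> r" for r
    unfolding KL_majorant_def using that t \<sigma>_props(3)[OF that] by simp
  moreover have "KL_majorant \<sigma> w 0 t = 0"
    unfolding KL_majorant_def using \<sigma>_props(1) ramp_majorant_nonneg[OF nonneg t] by simp
  ultimately show ?thesis
    unfolding classK_def classN_def by (auto intro: strict_mono_on_imp_mono_on)
qed

lemma KL_majorant_antimono:
  assumes r: "0 \<le> r"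
  shows "antimono_on {0..} (\<lambda>t. KL_majorant \<sigma> w r t)"
proof (rule monotone_onI)
  fix t1 t2 :: real assume t: "t1 \<in> {0..}" "t2 \<in> {0..}" "t1 \<le> t2"
  then have "ramp_majorant w r t2 \<le> ramp_majorant w r t1"
    by (intro ramp_majorant_antimono antimono) auto
  moreover have "r / (1 + t2) \<le> r / (1 + t1)"
    using t r by (intro divide_left_mono) auto
  ultimately show "KL_majorant \<sigma> w r t2 \<le> KL_majorant \<sigma> w r t1"
    unfolding KL_majorant_def by linarith
qed

lemma KL_majorant_tendsto:
  assumes r: "0 \<le> r"
  shows "((\<lambda>t. KL_majorant \<sigma> w r t) \<longlongrightarrow> 0) at_top"
proof -
  have "filterlim (\<lambda>t::real. 1 + t) at_top at_top"
    by (rule filterlim_tendsto_add_at_top[OF tendsto_const filterlim_ident])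
  then have "((\<lambda>t. r / (1 + t)) \<longlongrightarrow> 0) at_top"
    by (rule tendsto_divide_0[OF tendsto_const filterlim_at_top_imp_at_infinity])
  from tendsto_add[OF ramp_majorant_tendsto[OF tendsto] this]
  have upper: "((\<lambda>t. ramp_majorant w r t + r / (1 + t)) \<longlongrightarrow> 0) at_top" by simp
  have "0 \<le> KL_majorant \<sigma> w r t" if "0 \<le> t" for t
    using classK_KL_majorant[OF that] r by (simp add: classK_def classN_def)
  then have lower: "eventually (\<lambda>t. 0 \<le> KL_majorant \<sigma> w r t) at_top"
    by (auto simp: eventually_at_top_linorder)
  have "eventually (\<lambda>t. KL_majorant \<sigma> w r t \<le> ramp_majorant w r t + r / (1 + t)) at_top"
    by (simp add: KL_majorant_def)
  from tendsto_sandwich[OF lower this tendsto_const upper] show ?thesis .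
qed

lemma classKL_KL_majorant: "classKL (KL_majorant \<sigma> w)"
  unfolding classKL_def using classK_KL_majorant KL_majorant_antimono KL_majorant_tendsto by auto

end

text \<open>An observation \<open>(s, v, t, y)\<close> records the size of the initial data, the input norm, a time
  and the output norm at that time.\<close>

definition gain_excess ::
  "(real \<times> real \<times> real \<times> real) set \<Rightarrow> (real \<Rightarrow> real) \<Rightarrow> real \<Rightarrow> real \<Rightarrow> real" where
  "gain_excess Obs \<gamma> r t =
     Sup (insert 0 {y - \<gamma> v | s v t' y. (s, v, t', y) \<in> Obs \<and> s \<le> r \<and> v \<le> r \<and> t \<le> t'})"

context
  fixes Obs :: "(real \<times> real \<times> real \<times> real) set" and \<sigma> \<gamma> :: "real \<Rightarrow> real"
  assumes \<sigma>: "classN \<sigma>" and \<gamma>: "classN \<gamma>"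
    and nonneg: "\<And>s v t y. (s, v, t, y) \<in> Obs \<Longrightarrow> 0 \<le> s \<and> 0 \<le> v \<and> 0 \<le> t"
    and bound: "\<And>s v t y. (s, v, t, y) \<in> Obs \<Longrightarrow> y \<le> \<sigma> s + \<gamma> v"
begin

lemma gain_excess_set_le:
  assumes "z \<in> insert 0 {y - \<gamma> v | s v t' y. (s, v, t', y) \<in> Obs \<and> s \<le> r \<and> v \<le> r \<and> t \<le> t'}"
    and r: "0 \<le> r"
  shows "z \<le> \<sigma> r"
proof -
  have "y \<le> \<sigma> r + \<gamma> v" if "(s, v, t', y) \<in> Obs" "s \<le> r" for s v t' y
    using bound[OF that(1)] classN_mono[OF \<sigma>, of s r] nonneg[OF that(1)] that(2) by linarith
  then show ?thesis using assms classN_nonneg[OF \<sigma> r] by fastforce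
qed

lemma bdd_above_gain_excess_set:
  "0 \<le> r \<Longrightarrow> bdd_above (insert 0 {y - \<gamma> v | s v t' y. (s, v, t', y) \<in> Obs \<and> s \<le> r \<and> v \<le> r \<and> t \<le> t'})"
  using gain_excess_set_le by (intro bdd_aboveI) blast

lemma gain_excess_ge:
  "(s, v, t', y) \<in> Obs \<Longrightarrow> s \<le> r \<Longrightarrow> v \<le> r \<Longrightarrow> t \<le> t' \<Longrightarrow> y - \<gamma> v \<le> gain_excess Obs \<gamma> r t"
  unfolding gain_excess_def using nonneg
  by (intro cSup_upper bdd_above_gain_excess_set) (fastforce+)

lemma gain_excess_nonneg: "0 \<le> r \<Longrightarrow> 0 \<le> t \<Longrightarrow> 0 \<le> gain_excess Obs \<gamma> r t"
  unfolding gain_excess_def by (intro cSup_upper bdd_above_gain_excess_set) auto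

lemma gain_excess_le: "0 \<le> r \<Longrightarrow> 0 \<le> t \<Longrightarrow> gain_excess Obs \<gamma> r t \<le> \<sigma> r"
  unfolding gain_excess_def using gain_excess_set_le by (intro cSup_least) auto

lemma gain_excess_mono:
  assumes "0 \<le> r" "r \<le> r'" "0 \<le> t"
  shows "gain_excess Obs \<gamma> r t \<le> gain_excess Obs \<gamma> r' t"
  unfolding gain_excess_def using assms
  by (intro cSup_subset_mono bdd_above_gain_excess_set insert_mono) (auto, fastforce)

lemma gain_excess_antimono:
  assumes "0 \<le> r" "0 \<le> t" "t \<le> t'"
  shows "gain_excess Obs \<gamma> r t' \<le> gain_excess Obs \<gamma> r t"
  unfolding gain_excess_def using assms
  by (intro cSup_subset_mono bdd_above_gain_excess_set insert_mono) (auto, fastforce)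

lemma gain_excess_tendsto:
  assumes r: "0 \<le> r"
    and gain: "\<And>\<epsilon>. 0 < \<epsilon> \<Longrightarrow>
       \<exists>T. \<forall>(s, v, t, y) \<in> Obs. s \<le> r \<longrightarrow> v \<le> r \<longrightarrow> T \<le> t \<longrightarrow> y \<le> \<gamma> v + \<epsilon>"
  shows "((\<lambda>t. gain_excess Obs \<gamma> r t) \<longlongrightarrow> 0) at_top"
proof (rule order_tendstoI)
  fix a :: real assume "a < 0"
  then have "a < gain_excess Obs \<gamma> r t" if "0 \<le> t" for t
    using gain_excess_nonneg[OF r that] by linarith
  then show "\<forall>\<^sub>F t in at_top. a < gain_excess Obs \<gamma> r t"
    by (auto simp: eventually_at_top_linorder)
next
  fix a :: real assume a: "0 < a"
  then obtain T where T: "\<forall>(s, v, t, y) \<in> Obs. s \<le> r \<longrightarrow> v \<le> r \<longrightarrow> T \<le> t \<longrightarrow> y \<le> \<gamma> v + a / 2"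
    using gain[of "a / 2"] by auto
  have "gain_excess Obs \<gamma> r t \<le> a / 2" if "T \<le> t" for t
    unfolding gain_excess_def using a T that by (intro cSup_least) auto
  then have "gain_excess Obs \<gamma> r t < a" if "T \<le> t" for t using that a by fastforce
  then show "\<forall>\<^sub>F t in at_top. gain_excess Obs \<gamma> r t < a"
    by (auto simp: eventually_at_top_linorder)
qed

lemma KL_estimate_from_uniform_gain:
  assumes gain: "\<And>r \<epsilon>. 0 \<le> r \<Longrightarrow> 0 < \<epsilon> \<Longrightarrow>
     \<exists>T. \<forall>(s, v, t, y) \<in> Obs. s \<le> r \<longrightarrow> v \<le> r \<longrightarrow> T \<le> t \<longrightarrow> y \<le> \<gamma> v + \<epsilon>"
  shows "\<exists>\<beta> \<gamma>'. classKL \<beta> \<and> classN \<gamma>' \<and> (\<forall>(s, v, t, y) \<in> Obs. y \<le> \<beta> s t + \<gamma>' v)"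
proof -
  define \<beta> where "\<beta> = KL_majorant \<sigma> (gain_excess Obs \<gamma>)"
  have tendsto: "((\<lambda>t. gain_excess Obs \<gamma> r t) \<longlongrightarrow> 0) at_top" if "0 \<le> r" for r
    by (rule gain_excess_tendsto[OF that gain[OF that]])
  note excess = gain_excess_nonneg gain_excess_le gain_excess_mono gain_excess_antimono tendsto
  have \<beta>: "classKL \<beta>"
    unfolding \<beta>_def by (rule classKL_KL_majorant[OF \<sigma>]; rule excess; assumption)
  have \<beta>_ge: "gain_excess Obs \<gamma> r t \<le> \<beta> r t" if "0 \<le> r" "0 \<le> t" for r t
    unfolding \<beta>_def by (rule KL_majorant_ge[OF \<sigma> _ _ _ _ _ that]; rule excess; assumption)
  have "y \<le> \<beta> s t + (\<sigma> v + \<gamma> v)" if obs: "(s, v, t, y) \<in> Obs" for s v t y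
  proof -
    have s: "0 \<le> s" "0 \<le> v" "0 \<le> t" using nonneg[OF obs] by auto
    show ?thesis
    proof (cases "v \<le> s")
      case True
      then have "y - \<gamma> v \<le> gain_excess Obs \<gamma> s t" by (intro gain_excess_ge[OF obs]) auto
      then show ?thesis
        using \<beta>_ge[OF s(1,3)] classN_nonneg[OF \<sigma> s(2)] by linarith
    next
      case False
      then have "\<sigma> s \<le> \<sigma> v" using s by (intro classN_mono[OF \<sigma>]) auto
      then show ?thesis
        using bound[OF obs] classKL_nonneg[OF \<beta> s(1,3)] by linarith
    qed
  qed
  then show ?thesis using \<beta> classN_add[OF \<sigma> \<gamma>] by blast
qed

end

section \<open>The small-gain iteration\<close>

lemma small_gain_max:
  assumes "classN \<kappa>" "\<forall>s>0. \<kappa> s < s" "0 \<le> S" "0 \<le> g" "S \<le> max A (max (\<kappa> S) g)"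
  shows "S \<le> max A g"
proof (rule ccontr)
  assume "\<not> S \<le> max A g"
  then have "S \<le> \<kappa> S" "0 < S" using assms(4,5) by (auto simp: max_def split: if_splits)
  then show False using assms(2) by force
qed

text \<open>A restart at \<open>a = k (\<tau> + \<theta>)\<close> only sees the output on \<open>[a - \<theta>, T]\<close>, where the bound of
  stage \<open>k\<close> already holds.\<close>

lemma small_gain_iteration:
  fixes F :: "real \<Rightarrow> 'a::real_normed_vector" and \<kappa> :: "real \<Rightarrow> real"
  assumes \<theta>: "0 < \<theta>" and \<tau>: "0 \<le> \<tau>" and cont: "continuous_on {-\<theta>..T} F"
    and \<kappa>: "classN \<kappa>" and \<kappa>_less: "\<forall>s>0. \<kappa> s < s"
    and \<epsilon>: "0 < \<epsilon>" and g: "0 \<le> g" and \<delta>: "0 \<le> \<delta>"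
    and gap: "\<And>s. \<epsilon> < s \<Longrightarrow> s \<le> C \<Longrightarrow> \<kappa> s \<le> s - \<delta>"
    and init: "\<And>s. s \<in> {-\<theta>..T} \<Longrightarrow> norm (F s) \<le> max C g"
    and restart: "\<And>a t. 0 \<le> a \<Longrightarrow> \<tau> \<le> t \<Longrightarrow> a + t \<le> T \<Longrightarrow>
       norm (F (a + t)) \<le> max \<epsilon> (max (\<kappa> (sup_norm F (a - \<theta>) T)) g)"
    and s: "real k * (\<tau> + \<theta>) - \<theta> \<le> s" "s \<le> T"
  shows "norm (F s) \<le> max (max \<epsilon> (C - real k * \<delta>)) g"
  using s
proof (induction k arbitrary: s)
  case 0
  then show ?case using init[of s] by auto
next
  case (Suc k)
  define a where "a = real k * (\<tau> + \<theta>)"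
  define c where "c = max \<epsilon> (C - real k * \<delta>)"
  have a: "0 \<le> a" "a + \<tau> \<le> s" using Suc.prems \<tau> \<theta> by (auto simp: a_def algebra_simps)
  define S where "S = sup_norm F (a - \<theta>) T"
  have S_le: "S \<le> max c g"
    unfolding S_def c_def using a Suc.prems \<tau> \<theta> by (intro sup_norm_le Suc.IH) (auto simp: a_def)
  have "0 \<le> S"
    unfolding S_def using a Suc.prems \<tau> \<theta>
    by (intro sup_norm_nonneg continuous_on_subset[OF cont]) auto
  have "\<kappa> c \<le> max \<epsilon> (C - real (Suc k) * \<delta>)"
  proof (cases "C - real k * \<delta> \<le> \<epsilon>")
    case True
    then show ?thesis using classN_less_id_le[OF \<kappa> \<kappa>_less, of \<epsilon>] \<epsilon> by (simp add: c_def)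
  next
    case False
    then have "\<kappa> c \<le> c - \<delta>" unfolding c_def using \<delta> by (intro gap) auto
    then show ?thesis using False by (simp add: c_def algebra_simps)
  qed
  have "\<kappa> S \<le> \<kappa> (max c g)" by (rule classN_mono[OF \<kappa> \<open>0 \<le> S\<close> S_le])
  also have "\<dots> = max (\<kappa> c) (\<kappa> g)" using \<epsilon> g by (intro classN_max[OF \<kappa>]) (auto simp: c_def)
  also have "\<dots> \<le> max (max \<epsilon> (C - real (Suc k) * \<delta>)) g"
    using \<open>\<kappa> c \<le> _\<close> classN_less_id_le[OF \<kappa> \<kappa>_less g] by auto
  finally have "\<kappa> S \<le> max (max \<epsilon> (C - real (Suc k) * \<delta>)) g" .
  moreover have "norm (F s) \<le> max \<epsilon> (max (\<kappa> S) g)"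
    using restart[of a "s - a"] a Suc.prems by (simp add: S_def)
  ultimately show ?case by auto
qed

section \<open>Output small-gain estimates\<close>

text \<open>\<open>B \<xi> t\<close> is the transient term of the small-gain estimate; the three parts of the theorem
  differ only in \<open>B\<close>.\<close>

locale output_small_gain =
  fixes f :: "(real \<Rightarrow> 'n::euclidean_space) \<Rightarrow> 'm::euclidean_space \<Rightarrow> 'n"
    and \<theta> :: real and h0 :: "'n \<Rightarrow> 'p::euclidean_space"
    and B :: "(real \<Rightarrow> 'n) \<Rightarrow> real \<Rightarrow> real" and \<kappa> \<gamma> :: "real \<Rightarrow> real"
  assumes theta_pos: "0 < \<theta>" and h0_cont: "continuous_on UNIV h0"
    and \<kappa>: "classN \<kappa>" and \<kappa>_less: "\<forall>s>0. \<kappa> s < s" and \<gamma>: "classN \<gamma>"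
    and transient_le: "\<And>\<xi> t. \<xi> \<in> Xspace \<theta> \<Longrightarrow> 0 \<le> t \<Longrightarrow> B \<xi> t \<le> B \<xi> 0"
    and output_gain: "\<forall>\<xi>\<in>Xspace \<theta>. \<forall>u\<in>Mspace. ess_bounded u \<longrightarrow> (\<forall>t\<ge>0. \<forall>x. is_sol f \<theta> \<xi> u t x \<longrightarrow>
       norm (h0 (x t)) \<le> max (B \<xi> t) (max (\<kappa> (ymax \<theta> h0 x t)) (\<gamma> (unorm u))))"
begin

lemma gamma_unorm_nonneg: "ess_bounded u \<Longrightarrow> 0 \<le> \<gamma> (unorm u)"
  by (rule classN_nonneg[OF \<gamma> unorm_nonneg])

lemma output_gain_restart:
  assumes sol: "is_sol f \<theta> \<xi> u T x" and u: "u \<in> Mspace" "ess_bounded u"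
    and a: "0 \<le> a" "0 \<le> t" "a + t \<le> T"
  shows "norm (h0 (x (a + t))) \<le>
    max (B (\<lambda>s. x (s + a)) t) (max (\<kappa> (sup_norm (\<lambda>s. h0 (x s)) (a - \<theta>) T)) (\<gamma> (unorm u)))"
proof -
  have "is_sol f \<theta> (\<lambda>s. x (s + a)) (\<lambda>s. u (s + a)) t (\<lambda>s. x (s + a))"
    using is_sol_restrict[OF is_sol_shift[OF sol a(1)]] a by auto
  then have "norm (h0 (x (t + a))) \<le> max (B (\<lambda>s. x (s + a)) t)
      (max (\<kappa> (ymax \<theta> h0 (\<lambda>s. x (s + a)) t)) (\<gamma> (unorm (\<lambda>s. u (s + a)))))"
    using output_gain shift_in_Xspace[OF sol a(1)] Mspace_shift[OF u(1) a(1)]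
      ess_bounded_shift[OF u(2) a(1)] a by fastforce
  moreover have "ymax \<theta> h0 (\<lambda>s. x (s + a)) t = sup_norm (\<lambda>s. h0 (x s)) (a - \<theta>) (a + t)"
    using sup_norm_shift[of "\<lambda>s. h0 (x s)" a] by (simp add: ymax_eq_sup_norm algebra_simps)
  moreover have "\<kappa> (sup_norm (\<lambda>s. h0 (x s)) (a - \<theta>) (a + t)) \<le>
      \<kappa> (sup_norm (\<lambda>s. h0 (x s)) (a - \<theta>) T)"
    using is_sol_output_continuous_on[OF sol h0_cont] a theta_pos
    by (intro classN_mono[OF \<kappa>] sup_norm_nonneg sup_norm_mono) (auto intro: continuous_on_subset)
  moreover have "\<gamma> (unorm (\<lambda>s. u (s + a))) \<le> \<gamma> (unorm u)"
    using u a by (intro classN_mono[OF \<gamma>] unorm_nonneg ess_bounded_shift unorm_shift_le)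
  ultimately show ?thesis by (auto simp: add.commute[of t a])
qed

lemma output_sup_bound:
  assumes \<xi>: "\<xi> \<in> Xspace \<theta>" and u: "u \<in> Mspace" "ess_bounded u"
    and T: "0 \<le> T" and sol: "is_sol f \<theta> \<xi> u T x"
  shows "sup_norm (\<lambda>s. h0 (x s)) (-\<theta>) T \<le> max (max (Hout \<theta> h0 \<xi>) (B \<xi> 0)) (\<gamma> (unorm u))"
proof -
  let ?S = "sup_norm (\<lambda>s. h0 (x s)) (-\<theta>) T"
  have cont: "continuous_on {-\<theta>..T} (\<lambda>s. h0 (x s))"
    by (rule is_sol_output_continuous_on[OF sol h0_cont])
  have "?S \<le> max (max (Hout \<theta> h0 \<xi>) (B \<xi> 0)) (max (\<kappa> ?S) (\<gamma> (unorm u)))"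
  proof (rule sup_norm_le)
    fix s assume s: "s \<in> {-\<theta>..T}"
    show "norm (h0 (x s)) \<le> max (max (Hout \<theta> h0 \<xi>) (B \<xi> 0)) (max (\<kappa> ?S) (\<gamma> (unorm u)))"
    proof (cases "s \<le> 0")
      case True
      then have "norm (h0 (x s)) \<le> Hout \<theta> h0 \<xi>"
        using s sol norm_output_le_Hout[OF \<xi> h0_cont] by (auto simp: is_sol_def)
      then show ?thesis by auto
    next
      case False
      then have "norm (h0 (x s)) \<le> max (B \<xi> s) (max (\<kappa> (ymax \<theta> h0 x s)) (\<gamma> (unorm u)))"
        using output_gain \<xi> u s is_sol_restrict[OF sol, of s] by auto
      moreover have "B \<xi> s \<le> B \<xi> 0" using False \<xi> by (intro transient_le) auto
      moreover have "\<kappa> (ymax \<theta> h0 x s) \<le> \<kappa> ?S"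
        unfolding ymax_eq_sup_norm using False s theta_pos
        by (intro classN_mono[OF \<kappa>] sup_norm_nonneg sup_norm_mono[OF cont]
            continuous_on_subset[OF cont]) auto
      ultimately show ?thesis by linarith
    qed
  qed (use T theta_pos in auto)
  moreover have "0 \<le> ?S" using T theta_pos by (intro sup_norm_nonneg cont) auto
  ultimately show ?thesis
    using small_gain_max[OF \<kappa> \<kappa>_less _ gamma_unorm_nonneg[OF u(2)]] by simp
qed

lemma output_le_initial_max:
  assumes "\<xi> \<in> Xspace \<theta>" "u \<in> Mspace" "ess_bounded u" "0 \<le> T" "is_sol f \<theta> \<xi> u T x"
  shows "norm (h0 (x T)) \<le> max (max (Hout \<theta> h0 \<xi>) (B \<xi> 0)) (\<gamma> (unorm u))"
  using norm_le_sup_norm[OF is_sol_output_continuous_on[OF assms(5) h0_cont], of T]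
    output_sup_bound[OF assms] assms(4) theta_pos by auto

lemma Hout_restart_bounded:
  assumes \<xi>: "\<xi> \<in> Xspace \<theta>" and u: "u \<in> Mspace" "ess_bounded u"
    and sol: "is_sol f \<theta> \<xi> u T x" and a: "0 \<le> a" "a \<le> T"
    and C: "max (Hout \<theta> h0 \<xi>) (B \<xi> 0) \<le> C" and r: "unorm u \<le> r"
  shows "Hout \<theta> h0 (\<lambda>s. x (s + a)) \<le> C + \<gamma> r"
proof -
  have "Hout \<theta> h0 (\<lambda>s. x (s + a)) = sup_norm (\<lambda>s. h0 (x s)) (a - \<theta>) a"
    using sup_norm_shift[of "\<lambda>s. h0 (x s)" a] by (simp add: Hout_eq_sup_norm algebra_simps)
  also have "\<dots> \<le> sup_norm (\<lambda>s. h0 (x s)) (-\<theta>) T"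
    using a theta_pos by (intro sup_norm_mono is_sol_output_continuous_on[OF sol h0_cont]) auto
  also have "\<dots> \<le> max (max (Hout \<theta> h0 \<xi>) (B \<xi> 0)) (\<gamma> (unorm u))"
    using a by (intro output_sup_bound[OF \<xi> u _ sol]) auto
  also have "\<dots> \<le> C + \<gamma> r"
    using C Hout_nonneg[OF \<xi> h0_cont] theta_pos gamma_unorm_nonneg[OF u(2)]
      classN_mono[OF \<gamma> unorm_nonneg[OF u(2)] r] by auto
  finally show ?thesis .
qed

lemma output_history_gain:
  assumes \<alpha>: "classN \<alpha>" and B0: "\<And>\<xi>. \<xi> \<in> Xspace \<theta> \<Longrightarrow> B \<xi> 0 \<le> \<alpha> (Hout \<theta> h0 \<xi>)"
  shows "\<exists>\<sigma>1. classK \<sigma>1 \<and> (\<forall>\<xi>\<in>Xspace \<theta>. \<forall>u\<in>Mspace. ess_bounded u \<longrightarrow> (\<forall>T\<ge>0. \<forall>x.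
    is_sol f \<theta> \<xi> u T x \<longrightarrow> norm (h0 (x T)) \<le> max (\<sigma>1 (Hout \<theta> h0 \<xi>)) (\<sigma>1 (unorm u))))"
proof (intro exI[of _ "\<lambda>s. s + \<alpha> s + \<gamma> s"] conjI ballI allI impI)
  show "classK (\<lambda>s. s + \<alpha> s + \<gamma> s)" by (intro classK_add classK_id \<alpha> \<gamma>)
  fix \<xi> u T x
  assume \<xi>: "\<xi> \<in> Xspace \<theta>" and u: "u \<in> Mspace" "ess_bounded u" and T: "0 \<le> T"
    and sol: "is_sol f \<theta> \<xi> u T x"
  have H: "0 \<le> Hout \<theta> h0 \<xi>" and v: "0 \<le> unorm u"
    using Hout_nonneg[OF \<xi> h0_cont] theta_pos unorm_nonneg[OF u(2)] by auto
  have "norm (h0 (x T)) \<le> max (max (Hout \<theta> h0 \<xi>) (B \<xi> 0)) (\<gamma> (unorm u))"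
    by (rule output_le_initial_max[OF \<xi> u T sol])
  also have "\<dots> \<le> max (Hout \<theta> h0 \<xi> + \<alpha> (Hout \<theta> h0 \<xi>) + \<gamma> (Hout \<theta> h0 \<xi>))
      (unorm u + \<alpha> (unorm u) + \<gamma> (unorm u))"
    using H v B0[OF \<xi>] classN_nonneg[OF \<alpha> H] classN_nonneg[OF \<alpha> v] classN_nonneg[OF \<gamma> H]
      classN_nonneg[OF \<gamma> v] by auto
  finally show "norm (h0 (x T)) \<le> max (Hout \<theta> h0 \<xi> + \<alpha> (Hout \<theta> h0 \<xi>) + \<gamma> (Hout \<theta> h0 \<xi>))
      (unorm u + \<alpha> (unorm u) + \<gamma> (unorm u))" .
qed

end

text \<open>Parts 1 and 3 of the theorem are the case \<open>\<rho> = 0\<close>.\<close>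

locale KL_output_small_gain =
  fixes f :: "(real \<Rightarrow> 'n::euclidean_space) \<Rightarrow> 'm::euclidean_space \<Rightarrow> 'n"
    and \<theta> :: real and h0 :: "'n \<Rightarrow> 'p::euclidean_space"
    and \<beta> :: "real \<Rightarrow> real \<Rightarrow> real" and \<rho> :: "real \<Rightarrow> real" and P Q :: "(real \<Rightarrow> 'n) \<Rightarrow> real"
    and \<kappa> \<gamma> :: "real \<Rightarrow> real"
  assumes theta_pos: "0 < \<theta>" and h0_cont: "continuous_on UNIV h0"
    and \<kappa>: "classN \<kappa>" and \<kappa>_less: "\<forall>s>0. \<kappa> s < s" and \<gamma>: "classN \<gamma>"
    and \<beta>: "classKL \<beta>" and \<rho>: "classN \<rho>"
    and P_nonneg: "\<And>\<xi>. \<xi> \<in> Xspace \<theta> \<Longrightarrow> 0 \<le> P \<xi>"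
    and Q_nonneg: "\<And>\<xi>. \<xi> \<in> Xspace \<theta> \<Longrightarrow> 0 \<le> Q \<xi>"
    and KL_output_gain: "\<forall>\<xi>\<in>Xspace \<theta>. \<forall>u\<in>Mspace. ess_bounded u \<longrightarrow> (\<forall>t\<ge>0. \<forall>x. is_sol f \<theta> \<xi> u t x \<longrightarrow>
       norm (h0 (x t)) \<le> max (\<beta> (P \<xi>) (t / (1 + \<rho> (Q \<xi>))))
                              (max (\<kappa> (ymax \<theta> h0 x t)) (\<gamma> (unorm u))))"

sublocale KL_output_small_gain \<subseteq>
  output_small_gain f \<theta> h0 "\<lambda>\<xi> t. \<beta> (P \<xi>) (t / (1 + \<rho> (Q \<xi>)))" \<kappa> \<gamma>
proof unfold_locales
  fix \<xi> :: "real \<Rightarrow> 'n" and t :: real assume "\<xi> \<in> Xspace \<theta>" "0 \<le> t"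
  then show "\<beta> (P \<xi>) (t / (1 + \<rho> (Q \<xi>))) \<le> \<beta> (P \<xi>) (0 / (1 + \<rho> (Q \<xi>)))"
    using classN_nonneg[OF \<rho> Q_nonneg] by (auto intro!: classKL_antimono[OF \<beta>] P_nonneg)
qed (use theta_pos h0_cont \<kappa> \<kappa>_less \<gamma> KL_output_gain in auto)

locale KL_output_small_gain_sized = KL_output_small_gain +
  fixes SZ :: "(real \<Rightarrow> 'n::euclidean_space) \<Rightarrow> real" and \<sigma> :: "real \<Rightarrow> real"
  assumes \<sigma>: "classN \<sigma>"
    and size_nonneg: "\<And>\<xi>. \<xi> \<in> Xspace \<theta> \<Longrightarrow> 0 \<le> SZ \<xi>"
    and initial_le: "\<And>\<xi>. \<xi> \<in> Xspace \<theta> \<Longrightarrow> max (Hout \<theta> h0 \<xi>) (\<beta> (P \<xi>) 0) \<le> \<sigma> (SZ \<xi>)"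
    and restart_bounded: "\<And>r. 0 \<le> r \<Longrightarrow> \<exists>R. \<forall>\<xi> u T x a.
       \<xi> \<in> Xspace \<theta> \<and> u \<in> Mspace \<and> ess_bounded u \<and> is_sol f \<theta> \<xi> u T x \<and>
       SZ \<xi> \<le> r \<and> unorm u \<le> r \<and> 0 \<le> a \<and> a \<le> T \<longrightarrow>
       P (\<lambda>s. x (s + a)) \<le> R \<and> Q (\<lambda>s. x (s + a)) \<le> R"
begin

lemma transient_decay:
  assumes r: "0 \<le> r" and \<epsilon>: "0 < \<epsilon>"
  obtains \<tau> where "0 \<le> \<tau>"
    "\<And>\<xi> u T x a t. \<xi> \<in> Xspace \<theta> \<Longrightarrow> u \<in> Mspace \<Longrightarrow> ess_bounded u \<Longrightarrow> is_sol f \<theta> \<xi> u T x \<Longrightarrow>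
      SZ \<xi> \<le> r \<Longrightarrow> unorm u \<le> r \<Longrightarrow> 0 \<le> a \<Longrightarrow> \<tau> \<le> t \<Longrightarrow> a + t \<le> T \<Longrightarrow>
      \<beta> (P (\<lambda>s. x (s + a))) (t / (1 + \<rho> (Q (\<lambda>s. x (s + a))))) \<le> \<epsilon>"
proof -
  obtain R where R: "\<forall>\<xi> u T x a. \<xi> \<in> Xspace \<theta> \<and> u \<in> Mspace \<and> ess_bounded u \<and>
      is_sol f \<theta> \<xi> u T x \<and> SZ \<xi> \<le> r \<and> unorm u \<le> r \<and> 0 \<le> a \<and> a \<le> T \<longrightarrow>
      P (\<lambda>s. x (s + a)) \<le> R \<and> Q (\<lambda>s. x (s + a)) \<le> R"
    using restart_bounded[OF r] by blast
  define R' where "R' = max R 0"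
  have "0 \<le> R'" by (simp add: R'_def)
  then obtain \<tau> where \<tau>: "0 \<le> \<tau>" "\<beta> R' \<tau> \<le> \<epsilon>" by (rule classKL_eventually_le[OF \<beta> _ \<epsilon>])
  have \<rho>R: "0 \<le> \<rho> R'" by (rule classN_nonneg[OF \<rho>]) (simp add: R'_def)
  have \<tau>0: "0 \<le> \<tau> * (1 + \<rho> R')" using \<tau> \<rho>R by simp
  show ?thesis
  proof (rule that[OF \<tau>0])
    fix \<xi> u T x a t
    assume \<xi>: "\<xi> \<in> Xspace \<theta>" and u: "u \<in> Mspace" "ess_bounded u" and sol: "is_sol f \<theta> \<xi> u T x"
      and small: "SZ \<xi> \<le> r" "unorm u \<le> r" and a: "0 \<le> a" "\<tau> * (1 + \<rho> R') \<le> t" "a + t \<le> T"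
    have t: "0 \<le> t" and aT: "a \<le> T" using \<tau>0 a by linarith+
    define p q where "p = P (\<lambda>s. x (s + a))" and "q = Q (\<lambda>s. x (s + a))"
    have "p \<le> R" "q \<le> R" using R \<xi> u sol small a(1) aT unfolding p_def q_def by blast+
    moreover have "(\<lambda>s. x (s + a)) \<in> Xspace \<theta>" by (rule shift_in_Xspace[OF sol a(1) aT])
    ultimately have pq: "0 \<le> p" "p \<le> R'" "0 \<le> q" "q \<le> R'"
      using P_nonneg Q_nonneg unfolding p_def q_def R'_def by auto
    then have \<rho>q: "0 \<le> \<rho> q" "\<rho> q \<le> \<rho> R'" by (auto intro: classN_nonneg[OF \<rho>] classN_mono[OF \<rho>])
    then have "\<tau> * (1 + \<rho> q) \<le> t"
      using a(2) \<tau>(1) by (meson add_left_mono mult_left_mono order_trans)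
    then have slow: "\<tau> \<le> t / (1 + \<rho> q)" using \<rho>q by (simp add: field_simps)
    have "\<beta> p (t / (1 + \<rho> q)) \<le> \<beta> R' (t / (1 + \<rho> q))"
      using pq \<rho>q t by (intro classKL_mono[OF \<beta>]) auto
    also have "\<dots> \<le> \<beta> R' \<tau>" using pq by (intro classKL_antimono[OF \<beta> _ \<tau>(1) slow]) auto
    finally show "\<beta> (P (\<lambda>s. x (s + a))) (t / (1 + \<rho> (Q (\<lambda>s. x (s + a))))) \<le> \<epsilon>"
      using \<tau>(2) unfolding p_def q_def by linarith
  qed
qed

lemma uniform_output_bound:
  assumes \<xi>: "\<xi> \<in> Xspace \<theta>" and u: "u \<in> Mspace" "ess_bounded u" and T: "0 \<le> T"
    and sol: "is_sol f \<theta> \<xi> u T x" and small: "SZ \<xi> \<le> r" "unorm u \<le> r" and s: "s \<in> {-\<theta>..T}"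
  shows "norm (h0 (x s)) \<le> max (\<sigma> r + \<gamma> r) (\<gamma> (unorm u))"
proof -
  have "norm (h0 (x s)) \<le> sup_norm (\<lambda>s. h0 (x s)) (-\<theta>) T"
    by (rule norm_le_sup_norm[OF is_sol_output_continuous_on[OF sol h0_cont] s])
  also have "\<dots> \<le> max (max (Hout \<theta> h0 \<xi>) (\<beta> (P \<xi>) 0)) (\<gamma> (unorm u))"
    using output_sup_bound[OF \<xi> u T sol] by simp
  also have "\<dots> \<le> max (\<sigma> (SZ \<xi>)) (\<gamma> (unorm u))"
    using initial_le[OF \<xi>] by (intro max.mono) auto
  also have "\<dots> \<le> max (\<sigma> r + \<gamma> r) (\<gamma> (unorm u))"
    using classN_mono[OF \<sigma> size_nonneg[OF \<xi>] small(1)] classN_nonneg[OF \<gamma>, of r]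
      size_nonneg[OF \<xi>] small(1) by (intro max.mono) auto
  finally show ?thesis .
qed

lemma uniform_asymptotic_gain:
  assumes r: "0 \<le> r" and \<epsilon>: "0 < \<epsilon>"
  obtains T0 where "\<And>\<xi> u T x. \<xi> \<in> Xspace \<theta> \<Longrightarrow> u \<in> Mspace \<Longrightarrow> ess_bounded u \<Longrightarrow> 0 \<le> T \<Longrightarrow>
    is_sol f \<theta> \<xi> u T x \<Longrightarrow> SZ \<xi> \<le> r \<Longrightarrow> unorm u \<le> r \<Longrightarrow> T0 \<le> T \<Longrightarrow>
    norm (h0 (x T)) \<le> \<gamma> (unorm u) + \<epsilon>"
proof -
  obtain \<tau> where \<tau>: "0 \<le> \<tau>"
    "\<And>\<xi> u T x a t. \<xi> \<in> Xspace \<theta> \<Longrightarrow> u \<in> Mspace \<Longrightarrow> ess_bounded u \<Longrightarrow> is_sol f \<theta> \<xi> u T x \<Longrightarrow>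
      SZ \<xi> \<le> r \<Longrightarrow> unorm u \<le> r \<Longrightarrow> 0 \<le> a \<Longrightarrow> \<tau> \<le> t \<Longrightarrow> a + t \<le> T \<Longrightarrow>
      \<beta> (P (\<lambda>s. x (s + a))) (t / (1 + \<rho> (Q (\<lambda>s. x (s + a))))) \<le> \<epsilon>"
    using transient_decay[OF r \<epsilon>] by blast
  define C where "C = \<sigma> r + \<gamma> r"
  obtain \<delta> where \<delta>: "0 < \<delta>" "\<And>s. \<epsilon> < s \<Longrightarrow> s \<le> C \<Longrightarrow> \<kappa> s \<le> s - \<delta>"
    using classN_less_id_gap[OF \<kappa> \<kappa>_less \<epsilon>] by blast
  obtain K :: nat where "C / \<delta> \<le> real K" using real_arch_simple by blast
  then have K: "C - real K * \<delta> \<le> \<epsilon>" using \<delta>(1) \<epsilon> by (simp add: field_simps)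
  show ?thesis
  proof (rule that[of "real K * (\<tau> + \<theta>)"])
    fix \<xi> u T x
    assume \<xi>: "\<xi> \<in> Xspace \<theta>" and u: "u \<in> Mspace" "ess_bounded u" and T: "0 \<le> T"
      and sol: "is_sol f \<theta> \<xi> u T x" and small: "SZ \<xi> \<le> r" "unorm u \<le> r"
      and T0: "real K * (\<tau> + \<theta>) \<le> T"
    have restart: "norm (h0 (x (a + t))) \<le>
        max \<epsilon> (max (\<kappa> (sup_norm (\<lambda>s. h0 (x s)) (a - \<theta>) T)) (\<gamma> (unorm u)))"
      if a: "0 \<le> a" "\<tau> \<le> t" "a + t \<le> T" for a t
      using output_gain_restart[OF sol u a(1) _ a(3)] \<tau>(1) a(2)
        \<tau>(2)[OF \<xi> u sol small a] by fastforce
    have "norm (h0 (x T)) \<le> max (max \<epsilon> (C - real K * \<delta>)) (\<gamma> (unorm u))"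
      using T0 theta_pos unfolding C_def
      by (intro small_gain_iteration[OF theta_pos \<tau>(1) is_sol_output_continuous_on[OF sol h0_cont]
          \<kappa> \<kappa>_less \<epsilon> gamma_unorm_nonneg[OF u(2)] less_imp_le[OF \<delta>(1)] \<delta>(2)[unfolded C_def]
          uniform_output_bound[OF \<xi> u T sol small] restart]) auto
    then show "norm (h0 (x T)) \<le> \<gamma> (unorm u) + \<epsilon>"
      using K gamma_unorm_nonneg[OF u(2)] \<epsilon> by auto
  qed
qed

definition observations :: "(real \<times> real \<times> real \<times> real) set" where
  "observations = {(SZ \<xi>, unorm u, T, norm (h0 (x T))) | \<xi> u T x.
     \<xi> \<in> Xspace \<theta> \<and> u \<in> Mspace \<and> ess_bounded u \<and> 0 \<le> T \<and> is_sol f \<theta> \<xi> u T x}"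

lemma observationsE:
  assumes "(s, v, t, y) \<in> observations"
  obtains \<xi> u x where "\<xi> \<in> Xspace \<theta>" "u \<in> Mspace" "ess_bounded u" "0 \<le> t" "is_sol f \<theta> \<xi> u t x"
    "s = SZ \<xi>" "v = unorm u" "y = norm (h0 (x t))"
  using assms unfolding observations_def by blast

lemma observations_nonneg: "(s, v, t, y) \<in> observations \<Longrightarrow> 0 \<le> s \<and> 0 \<le> v \<and> 0 \<le> t"
  by (elim observationsE) (auto intro: size_nonneg unorm_nonneg)

lemma observations_bound:
  assumes "(s, v, t, y) \<in> observations"
  shows "y \<le> \<sigma> s + \<gamma> v"
  using assms
proof (rule observationsE)
  fix \<xi> u x
  assume obs: "\<xi> \<in> Xspace \<theta>" "u \<in> Mspace" "ess_bounded u" "0 \<le> t" "is_sol f \<theta> \<xi> u t x"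
    "s = SZ \<xi>" "v = unorm u" "y = norm (h0 (x t))"
  have "y \<le> max (max (Hout \<theta> h0 \<xi>) (\<beta> (P \<xi>) 0)) (\<gamma> v)"
    using output_le_initial_max[OF obs(1-5)] obs(7,8) by simp
  also have "\<dots> \<le> max (\<sigma> s) (\<gamma> v)" using initial_le[OF obs(1)] obs(6) by (intro max.mono) auto
  also have "\<dots> \<le> \<sigma> s + \<gamma> v"
    using obs classN_nonneg[OF \<sigma> size_nonneg[OF obs(1)]] gamma_unorm_nonneg[OF obs(3)] by auto
  finally show ?thesis .
qed

lemma observations_gain:
  assumes "0 \<le> r" "0 < \<epsilon>"
  shows "\<exists>T. \<forall>(s, v, t, y) \<in> observations. s \<le> r \<longrightarrow> v \<le> r \<longrightarrow> T \<le> t \<longrightarrow> y \<le> \<gamma> v + \<epsilon>"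
proof -
  obtain T0 where T0: "\<And>\<xi> u T x. \<xi> \<in> Xspace \<theta> \<Longrightarrow> u \<in> Mspace \<Longrightarrow> ess_bounded u \<Longrightarrow> 0 \<le> T \<Longrightarrow>
    is_sol f \<theta> \<xi> u T x \<Longrightarrow> SZ \<xi> \<le> r \<Longrightarrow> unorm u \<le> r \<Longrightarrow> T0 \<le> T \<Longrightarrow>
    norm (h0 (x T)) \<le> \<gamma> (unorm u) + \<epsilon>"
    using uniform_asymptotic_gain[OF assms] by blast
  show ?thesis
  proof (intro exI[of _ T0] ballI, clarify)
    fix s v t y assume "(s, v, t, y) \<in> observations" "s \<le> r" "v \<le> r" "T0 \<le> t"
    then show "y \<le> \<gamma> v + \<epsilon>" by (elim observationsE) (auto intro: T0)
  qed
qed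

lemma IOS_estimate:
  "\<exists>\<beta> \<gamma>'. classKL \<beta> \<and> classN \<gamma>' \<and> (\<forall>\<xi>\<in>Xspace \<theta>. \<forall>u\<in>Mspace. ess_bounded u \<longrightarrow>
     (\<forall>T\<ge>0. \<forall>x. is_sol f \<theta> \<xi> u T x \<longrightarrow> norm (h0 (x T)) \<le> \<beta> (SZ \<xi>) T + \<gamma>' (unorm u)))"
proof -
  have "\<exists>\<beta>' \<gamma>'. classKL \<beta>' \<and> classN \<gamma>' \<and> (\<forall>(s, v, t, y) \<in> observations. y \<le> \<beta>' s t + \<gamma>' v)"
    by (rule KL_estimate_from_uniform_gain[OF \<sigma> \<gamma>];
        rule observations_nonneg observations_bound observations_gain; assumption)
  then obtain \<beta>' \<gamma>' where "classKL \<beta>'" "classN \<gamma>'"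
    and estimate: "\<forall>(s, v, t, y) \<in> observations. y \<le> \<beta>' s t + \<gamma>' v"
    by blast
  moreover have "(SZ \<xi>, unorm u, T, norm (h0 (x T))) \<in> observations"
    if "\<xi> \<in> Xspace \<theta>" "u \<in> Mspace" "ess_bounded u" "0 \<le> T" "is_sol f \<theta> \<xi> u T x" for \<xi> u T x
    unfolding observations_def using that by blast
  ultimately show ?thesis by fastforce
qed

end

lemma GS_output_small_gain_imp_IOS:
  fixes f :: "(real \<Rightarrow> 'n::euclidean_space) \<Rightarrow> 'm::euclidean_space \<Rightarrow> 'n"
    and h0 :: "'n \<Rightarrow> 'p::euclidean_space"
  assumes \<theta>: "0 < \<theta>" and h0_cont: "continuous_on UNIV h0"
    and \<pi>: "classN \<pi>" and h0_le: "\<forall>v. norm (h0 v) \<le> \<pi> (norm v)"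
    and GS: "GS f \<theta>"
    and \<beta>: "classKL \<beta>" and \<kappa>: "classN \<kappa>" and \<gamma>: "classN \<gamma>" and \<kappa>_less: "\<forall>s>0. \<kappa> s < s"
    and gain: "\<forall>\<xi>\<in>Xspace \<theta>. \<forall>u\<in>Mspace. ess_bounded u \<longrightarrow> (\<forall>t\<ge>0. \<forall>x. is_sol f \<theta> \<xi> u t x \<longrightarrow>
       norm (h0 (x t)) \<le> max (\<beta> (hnorm \<theta> \<xi>) t) (max (\<kappa> (ymax \<theta> h0 x t)) (\<gamma> (unorm u))))"
  shows "IOS f \<theta> h0"
proof -
  have h_nonneg: "\<And>\<xi>. \<xi> \<in> Xspace \<theta> \<Longrightarrow> 0 \<le> hnorm \<theta> \<xi>"
    using \<theta> by (auto intro: hnorm_nonneg)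
  obtain \<sigma> \<mu> where \<sigma>: "classN \<sigma>" and \<mu>: "classN \<mu>"
    and state_bound: "\<forall>\<xi>\<in>Xspace \<theta>. \<forall>u\<in>Mspace. ess_bounded u \<longrightarrow> (\<forall>T\<ge>0. \<forall>x.
      is_sol f \<theta> \<xi> u T x \<longrightarrow> norm (x T) \<le> \<sigma> (hnorm \<theta> \<xi>) + \<mu> (unorm u) + 0)"
    using GS unfolding GS_def classKinf_def classK_def by auto
  have initial: "max (Hout \<theta> h0 \<xi>) (\<beta> (hnorm \<theta> \<xi>) 0) \<le> \<pi> (hnorm \<theta> \<xi>) + \<beta> (hnorm \<theta> \<xi>) 0"
    if \<xi>: "\<xi> \<in> Xspace \<theta>" for \<xi>
    using Hout_le_classN[OF \<xi> _ \<pi> h0_le] \<theta> classKL_nonneg[OF \<beta> h_nonneg[OF \<xi>], of 0]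
      classN_nonneg[OF \<pi> h_nonneg[OF \<xi>]] by auto
  have restart: "\<exists>R. \<forall>\<xi> u T x a. \<xi> \<in> Xspace \<theta> \<and> u \<in> Mspace \<and> ess_bounded u \<and>
      is_sol f \<theta> \<xi> u T x \<and> hnorm \<theta> \<xi> \<le> r \<and> unorm u \<le> r \<and> 0 \<le> a \<and> a \<le> T \<longrightarrow>
      hnorm \<theta> (\<lambda>s. x (s + a)) \<le> R \<and> hnorm \<theta> (\<lambda>s. x (s + a)) \<le> R" for r
    using hnorm_restart_bounded[OF _ \<sigma> \<mu> _ state_bound] \<theta> by (intro exI[of _ "r + \<sigma> r + \<mu> r + 0"]) auto
  interpret KL_output_small_gain_sized f \<theta> h0 \<beta> "\<lambda>_. 0" "hnorm \<theta>" "hnorm \<theta>" \<kappa> \<gamma>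
    "hnorm \<theta>" "\<lambda>r. \<pi> r + \<beta> r 0"
    by unfold_locales (use \<theta> h0_cont \<kappa> \<kappa>_less \<gamma> \<beta> classN_zero h_nonneg gain initial restart
        classN_add[OF \<pi> classKL_classN[OF \<beta>]] in auto)
  show ?thesis using IOS_estimate GS unfolding IOS_def GS_def by blast
qed

lemma UBIBS_output_small_gain_imp_OL_IOS_hist:
  fixes f :: "(real \<Rightarrow> 'n::euclidean_space) \<Rightarrow> 'm::euclidean_space \<Rightarrow> 'n"
    and h0 :: "'n \<Rightarrow> 'p::euclidean_space"
  assumes \<theta>: "0 < \<theta>" and h0_cont: "continuous_on UNIV h0"
    and \<pi>: "classN \<pi>" and h0_le: "\<forall>v. norm (h0 v) \<le> \<pi> (norm v)"
    and UBIBS: "UBIBS f \<theta>"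
    and \<beta>: "classKL \<beta>" and \<rho>: "classN \<rho>" and \<kappa>: "classN \<kappa>" and \<gamma>: "classN \<gamma>"
    and \<kappa>_less: "\<forall>s>0. \<kappa> s < s"
    and gain: "\<forall>\<xi>\<in>Xspace \<theta>. \<forall>u\<in>Mspace. ess_bounded u \<longrightarrow> (\<forall>t\<ge>0. \<forall>x. is_sol f \<theta> \<xi> u t x \<longrightarrow>
       norm (h0 (x t)) \<le> max (\<beta> (Hout \<theta> h0 \<xi>) (t / (1 + \<rho> (hnorm \<theta> \<xi>))))
                              (max (\<kappa> (ymax \<theta> h0 x t)) (\<gamma> (unorm u))))"
  shows "OL_IOS_hist f \<theta> h0"
proof -
  have h_nonneg: "\<And>\<xi>. \<xi> \<in> Xspace \<theta> \<Longrightarrow> 0 \<le> hnorm \<theta> \<xi>"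
    using \<theta> by (auto intro: hnorm_nonneg)
  have H_nonneg: "\<And>\<xi>. \<xi> \<in> Xspace \<theta> \<Longrightarrow> 0 \<le> Hout \<theta> h0 \<xi>"
    using \<theta> h0_cont by (auto intro: Hout_nonneg)
  interpret KL_output_small_gain f \<theta> h0 \<beta> \<rho> "Hout \<theta> h0" "hnorm \<theta>" \<kappa> \<gamma>
    by unfold_locales (use \<theta> h0_cont \<kappa> \<kappa>_less \<gamma> \<beta> \<rho> h_nonneg H_nonneg gain in auto)
  obtain \<sigma> \<mu> c where \<sigma>: "classN \<sigma>" and \<mu>: "classN \<mu>" and c: "0 < c"
    and state_bound: "\<forall>\<xi>\<in>Xspace \<theta>. \<forall>u\<in>Mspace. ess_bounded u \<longrightarrow> (\<forall>T\<ge>0. \<forall>x.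
      is_sol f \<theta> \<xi> u T x \<longrightarrow> norm (x T) \<le> \<sigma> (hnorm \<theta> \<xi>) + \<mu> (unorm u) + c)"
    using UBIBS unfolding UBIBS_def classKinf_def classK_def by auto
  define \<sigma>0 where "\<sigma>0 r = \<pi> r + \<beta> (\<pi> r) 0" for r
  have \<sigma>0: "classN \<sigma>0"
    unfolding \<sigma>0_def by (intro classN_add \<pi> classN_comp[OF classKL_classN[OF \<beta>]]) simp_all
  have initial: "max (Hout \<theta> h0 \<xi>) (\<beta> (Hout \<theta> h0 \<xi>) 0) \<le> \<sigma>0 (hnorm \<theta> \<xi>)"
    if \<xi>: "\<xi> \<in> Xspace \<theta>" for \<xi>
  proof -
    have H: "Hout \<theta> h0 \<xi> \<le> \<pi> (hnorm \<theta> \<xi>)" using Hout_le_classN[OF \<xi> _ \<pi> h0_le] \<theta> by simp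
    then have "\<beta> (Hout \<theta> h0 \<xi>) 0 \<le> \<beta> (\<pi> (hnorm \<theta> \<xi>)) 0"
      by (intro classKL_mono[OF \<beta>] H_nonneg \<xi>) simp
    then show ?thesis
      unfolding \<sigma>0_def using H H_nonneg[OF \<xi>] classKL_nonneg[OF \<beta> H_nonneg[OF \<xi>], of 0]
        classKL_nonneg[OF \<beta> classN_nonneg[OF \<pi> h_nonneg[OF \<xi>]], of 0] by auto
  qed
  have restart: "\<exists>R. \<forall>\<xi> u T x a. \<xi> \<in> Xspace \<theta> \<and> u \<in> Mspace \<and> ess_bounded u \<and>
      is_sol f \<theta> \<xi> u T x \<and> hnorm \<theta> \<xi> \<le> r \<and> unorm u \<le> r \<and> 0 \<le> a \<and> a \<le> T \<longrightarrow>
      Hout \<theta> h0 (\<lambda>s. x (s + a)) \<le> R \<and> hnorm \<theta> (\<lambda>s. x (s + a)) \<le> R" for r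
  proof (intro exI[of _ "max (\<sigma>0 r + \<gamma> r) (r + \<sigma> r + \<mu> r + c)"] allI impI, elim conjE)
    fix \<xi> u T x a
    assume \<xi>: "\<xi> \<in> Xspace \<theta>" and u: "u \<in> Mspace" "ess_bounded u" and sol: "is_sol f \<theta> \<xi> u T x"
      and small: "hnorm \<theta> \<xi> \<le> r" "unorm u \<le> r" and a: "0 \<le> a" "a \<le> T"
    have "max (Hout \<theta> h0 \<xi>) (\<beta> (Hout \<theta> h0 \<xi>) (0 / (1 + \<rho> (hnorm \<theta> \<xi>)))) \<le> \<sigma>0 r"
      using initial[OF \<xi>] classN_mono[OF \<sigma>0 h_nonneg[OF \<xi>] small(1)] by simp
    then have "Hout \<theta> h0 (\<lambda>s. x (s + a)) \<le> \<sigma>0 r + \<gamma> r"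
      by (rule Hout_restart_bounded[OF \<xi> u sol a _ small(2)])
    moreover have "hnorm \<theta> (\<lambda>s. x (s + a)) \<le> r + \<sigma> r + \<mu> r + c"
      using \<theta> c by (intro hnorm_restart_bounded[OF _ \<sigma> \<mu> _ state_bound \<xi> u sol small a]) auto
    ultimately show "Hout \<theta> h0 (\<lambda>s. x (s + a)) \<le> max (\<sigma>0 r + \<gamma> r) (r + \<sigma> r + \<mu> r + c) \<and>
        hnorm \<theta> (\<lambda>s. x (s + a)) \<le> max (\<sigma>0 r + \<gamma> r) (r + \<sigma> r + \<mu> r + c)"
      by auto
  qed
  interpret KL_output_small_gain_sized f \<theta> h0 \<beta> \<rho> "Hout \<theta> h0" "hnorm \<theta>" \<kappa> \<gamma> "hnorm \<theta>" \<sigma>0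
    by unfold_locales (use \<sigma>0 h_nonneg initial restart in auto)
  have "\<exists>\<sigma>1. classK \<sigma>1 \<and> (\<forall>\<xi>\<in>Xspace \<theta>. \<forall>u\<in>Mspace. ess_bounded u \<longrightarrow> (\<forall>T\<ge>0. \<forall>x.
      is_sol f \<theta> \<xi> u T x \<longrightarrow> norm (h0 (x T)) \<le> max (\<sigma>1 (Hout \<theta> h0 \<xi>)) (\<sigma>1 (unorm u))))"
    by (rule output_history_gain[OF classKL_classN[OF \<beta> order_refl]]) simp
  then show ?thesis using IOS_estimate UBIBS unfolding OL_IOS_hist_def IOS_def UBIBS_def by blast
qed

lemma output_small_gain_imp_SI_IOS_hist:
  fixes f :: "(real \<Rightarrow> 'n::euclidean_space) \<Rightarrow> 'm::euclidean_space \<Rightarrow> 'n"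
    and h0 :: "'n \<Rightarrow> 'p::euclidean_space"
  assumes \<theta>: "0 < \<theta>" and h0_cont: "continuous_on UNIV h0"
    and FC: "forward_complete f \<theta>"
    and \<beta>: "classKL \<beta>" and \<kappa>: "classN \<kappa>" and \<gamma>: "classN \<gamma>" and \<kappa>_less: "\<forall>s>0. \<kappa> s < s"
    and gain: "\<forall>\<xi>\<in>Xspace \<theta>. \<forall>u\<in>Mspace. ess_bounded u \<longrightarrow> (\<forall>t\<ge>0. \<forall>x. is_sol f \<theta> \<xi> u t x \<longrightarrow>
       norm (h0 (x t)) \<le> max (\<beta> (Hout \<theta> h0 \<xi>) t) (max (\<kappa> (ymax \<theta> h0 x t)) (\<gamma> (unorm u))))"
  shows "SI_IOS_hist f \<theta> h0"
proof -
  have H_nonneg: "\<And>\<xi>. \<xi> \<in> Xspace \<theta> \<Longrightarrow> 0 \<le> Hout \<theta> h0 \<xi>"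
    using \<theta> h0_cont by (auto intro: Hout_nonneg)
  interpret KL_output_small_gain f \<theta> h0 \<beta> "\<lambda>_. 0" "Hout \<theta> h0" "Hout \<theta> h0" \<kappa> \<gamma>
    by unfold_locales (use \<theta> h0_cont \<kappa> \<kappa>_less \<gamma> \<beta> classN_zero H_nonneg gain in auto)
  define \<sigma>0 where "\<sigma>0 r = r + \<beta> r 0" for r
  have \<sigma>0: "classN \<sigma>0"
    unfolding \<sigma>0_def by (intro classN_add classKL_classN[OF \<beta>]) (auto simp: classN_def mono_on_def)
  have initial: "max (Hout \<theta> h0 \<xi>) (\<beta> (Hout \<theta> h0 \<xi>) 0) \<le> \<sigma>0 (Hout \<theta> h0 \<xi>)"
    if "\<xi> \<in> Xspace \<theta>" for \<xi>
    unfolding \<sigma>0_def using H_nonneg[OF that] classKL_nonneg[OF \<beta> H_nonneg[OF that], of 0] by auto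
  have restart: "\<exists>R. \<forall>\<xi> u T x a. \<xi> \<in> Xspace \<theta> \<and> u \<in> Mspace \<and> ess_bounded u \<and>
      is_sol f \<theta> \<xi> u T x \<and> Hout \<theta> h0 \<xi> \<le> r \<and> unorm u \<le> r \<and> 0 \<le> a \<and> a \<le> T \<longrightarrow>
      Hout \<theta> h0 (\<lambda>s. x (s + a)) \<le> R \<and> Hout \<theta> h0 (\<lambda>s. x (s + a)) \<le> R" for r
  proof (intro exI[of _ "\<sigma>0 r + \<gamma> r"] allI impI, elim conjE)
    fix \<xi> u T x a
    assume \<xi>: "\<xi> \<in> Xspace \<theta>" and u: "u \<in> Mspace" "ess_bounded u" and sol: "is_sol f \<theta> \<xi> u T x"
      and small: "Hout \<theta> h0 \<xi> \<le> r" "unorm u \<le> r" and a: "0 \<le> a" "a \<le> T"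
    have "max (Hout \<theta> h0 \<xi>) (\<beta> (Hout \<theta> h0 \<xi>) (0 / (1 + 0))) \<le> \<sigma>0 r"
      using initial[OF \<xi>] classN_mono[OF \<sigma>0 H_nonneg[OF \<xi>] small(1)] by simp
    from Hout_restart_bounded[OF \<xi> u sol a this small(2)]
    show "Hout \<theta> h0 (\<lambda>s. x (s + a)) \<le> \<sigma>0 r + \<gamma> r \<and> Hout \<theta> h0 (\<lambda>s. x (s + a)) \<le> \<sigma>0 r + \<gamma> r"
      by simp
  qed
  interpret KL_output_small_gain_sized f \<theta> h0 \<beta> "\<lambda>_. 0" "Hout \<theta> h0" "Hout \<theta> h0" \<kappa> \<gamma>
    "Hout \<theta> h0" \<sigma>0
    by unfold_locales (use \<sigma>0 H_nonneg initial restart in auto)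
  show ?thesis using IOS_estimate FC unfolding SI_IOS_hist_def by blast
qed

theorem proposition4p2:
  fixes f :: "(real \<Rightarrow> real ^ 'n) \<Rightarrow> real ^ 'm \<Rightarrow> real ^ 'n"
    and h0 :: "real ^ 'n \<Rightarrow> real ^ 'p"
    and \<theta> :: real
  assumes theta_pos: "\<theta> > 0"
    and f_lip: "loc_lipschitz f \<theta>"
    and f_bdd: "bounded_on_bounded f \<theta>"
    and h0_cont: "continuous_on UNIV h0"
    and h0_bound: "\<exists>\<pi>. classN \<pi> \<and> (\<forall>v. norm (h0 v) \<le> \<pi> (norm v))"
  shows
   "(GS f \<theta> \<and>
      (\<exists>\<beta> \<kappa> \<gamma>. classKL \<beta> \<and> classN \<kappa> \<and> classN \<gamma> \<and> (\<forall>s>0. \<kappa> s < s) \<and>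
        (\<forall>\<xi>\<in>Xspace \<theta>. \<forall>u\<in>Mspace. ess_bounded u \<longrightarrow> (\<forall>t\<ge>0. \<forall>x. is_sol f \<theta> \<xi> u t x \<longrightarrow>
           norm (h0 (x t)) \<le> max (\<beta> (hnorm \<theta> \<xi>) t)
                                  (max (\<kappa> (ymax \<theta> h0 x t)) (\<gamma> (unorm u))))))
     \<longrightarrow> IOS f \<theta> h0)
  \<and> (UBIBS f \<theta> \<and>
      (\<exists>\<beta> \<rho> \<kappa> \<gamma>. classKL \<beta> \<and> classN \<rho> \<and> classN \<kappa> \<and> classN \<gamma> \<and> (\<forall>s>0. \<kappa> s < s) \<and>
        (\<forall>\<xi>\<in>Xspace \<theta>. \<forall>u\<in>Mspace. ess_bounded u \<longrightarrow> (\<forall>t\<ge>0. \<forall>x. is_sol f \<theta> \<xi> u t x \<longrightarrow>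
           norm (h0 (x t)) \<le> max (\<beta> (Hout \<theta> h0 \<xi>) (t / (1 + \<rho> (hnorm \<theta> \<xi>))))
                                  (max (\<kappa> (ymax \<theta> h0 x t)) (\<gamma> (unorm u))))))
     \<longrightarrow> OL_IOS_hist f \<theta> h0)
  \<and> (forward_complete f \<theta> \<and>
      (\<exists>\<beta> \<kappa> \<gamma>. classKL \<beta> \<and> classN \<kappa> \<and> classN \<gamma> \<and> (\<forall>s>0. \<kappa> s < s) \<and>
        (\<forall>\<xi>\<in>Xspace \<theta>. \<forall>u\<in>Mspace. ess_bounded u \<longrightarrow> (\<forall>t\<ge>0. \<forall>x. is_sol f \<theta> \<xi> u t x \<longrightarrow>
           norm (h0 (x t)) \<le> max (\<beta> (Hout \<theta> h0 \<xi>) t)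
                                  (max (\<kappa> (ymax \<theta> h0 x t)) (\<gamma> (unorm u))))))
     \<longrightarrow> SI_IOS_hist f \<theta> h0)"
proof (intro conjI impI; elim conjE exE)
  \<comment> \<open>\<open>f_lip\<close> and \<open>f_bdd\<close> only serve existence and uniqueness of solutions, which the
    hypotheses presuppose.\<close>
  obtain \<pi> where \<pi>: "classN \<pi>" "\<forall>v. norm (h0 v) \<le> \<pi> (norm v)" using h0_bound by blast
  fix \<beta> \<kappa> \<gamma> \<rho>
  show "IOS f \<theta> h0"
    if "GS f \<theta>" "classKL \<beta>" "classN \<kappa>" "classN \<gamma>" "\<forall>s>0. \<kappa> s < s"
      "\<forall>\<xi>\<in>Xspace \<theta>. \<forall>u\<in>Mspace. ess_bounded u \<longrightarrow> (\<forall>t\<ge>0. \<forall>x. is_sol f \<theta> \<xi> u t x \<longrightarrow>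
         norm (h0 (x t)) \<le> max (\<beta> (hnorm \<theta> \<xi>) t) (max (\<kappa> (ymax \<theta> h0 x t)) (\<gamma> (unorm u))))"
    by (rule GS_output_small_gain_imp_IOS[OF theta_pos h0_cont \<pi> that])
  show "OL_IOS_hist f \<theta> h0"
    if "UBIBS f \<theta>" "classKL \<beta>" "classN \<rho>" "classN \<kappa>" "classN \<gamma>" "\<forall>s>0. \<kappa> s < s"
      "\<forall>\<xi>\<in>Xspace \<theta>. \<forall>u\<in>Mspace. ess_bounded u \<longrightarrow> (\<forall>t\<ge>0. \<forall>x. is_sol f \<theta> \<xi> u t x \<longrightarrow>
         norm (h0 (x t)) \<le> max (\<beta> (Hout \<theta> h0 \<xi>) (t / (1 + \<rho> (hnorm \<theta> \<xi>))))
                                (max (\<kappa> (ymax \<theta> h0 x t)) (\<gamma> (unorm u))))"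
    by (rule UBIBS_output_small_gain_imp_OL_IOS_hist[OF theta_pos h0_cont \<pi> that])
  show "SI_IOS_hist f \<theta> h0"
    if "forward_complete f \<theta>" "classKL \<beta>" "classN \<kappa>" "classN \<gamma>" "\<forall>s>0. \<kappa> s < s"
      "\<forall>\<xi>\<in>Xspace \<theta>. \<forall>u\<in>Mspace. ess_bounded u \<longrightarrow> (\<forall>t\<ge>0. \<forall>x. is_sol f \<theta> \<xi> u t x \<longrightarrow>
         norm (h0 (x t)) \<le> max (\<beta> (Hout \<theta> h0 \<xi>) t) (max (\<kappa> (ymax \<theta> h0 x t)) (\<gamma> (unorm u))))"
    by (rule output_small_gain_imp_SI_IOS_hist[OF theta_pos h0_cont that])
qed

end
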